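(* Let $p>2$ be a prime, $H$ the quaternion algebra over $\mathbb Q$ ramified exactly at $p$ and $\infty$, $\mathscr O$ a maximal order in $H$ and $\tilde{\mathscr O}=\{x\in\mathscr O:p\mid\Delta(x)\}$. Let $L\subset\tilde{\mathscr O}$ be a lattice with $[\tilde{\mathscr O}:L]=p$. Then $L$ is an order if and only if $\mathbb Z+p\mathscr O\subset L$.
   Context: $\Delta(x)=\mathrm{tr}(x)^2-4N(x)$ with $N$, $\mathrm{tr}$ reduced norm and trace. $\tilde{\mathscr O}$ is the unique order of index $p$ in $\mathscr O$. *)

theory Defs
  imports Complex_Main "HOL-Computational_Algebra.Primes"
begin

text \<open>Quaternion algebra (a,b)_Q over the rationals, with Q-basis 1, i, j, k = ij,
  i^2 = a, j^2 = b, ij = -ji.  An element x0 + x1 i + x2 j + x3 k is Quat x0 x1 x2 x3.\<close>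

datatype quat = Quat rat rat rat rat

fun qadd :: "quat \<Rightarrow> quat \<Rightarrow> quat" where
  "qadd (Quat x0 x1 x2 x3) (Quat y0 y1 y2 y3) = Quat (x0+y0) (x1+y1) (x2+y2) (x3+y3)"

fun qsmul :: "rat \<Rightarrow> quat \<Rightarrow> quat" where
  "qsmul c (Quat x0 x1 x2 x3) = Quat (c*x0) (c*x1) (c*x2) (c*x3)"

definition qzero :: quat where "qzero = Quat 0 0 0 0"

definition qone :: quat where "qone = Quat 1 0 0 0"

definition qof_int :: "int \<Rightarrow> quat" where "qof_int n = Quat (of_int n) 0 0 0"

fun qmul :: "rat \<Rightarrow> rat \<Rightarrow> quat \<Rightarrow> quat \<Rightarrow> quat" where
  "qmul a b (Quat x0 x1 x2 x3) (Quat y0 y1 y2 y3) =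
     Quat (x0*y0 + a*x1*y1 + b*x2*y2 - a*b*x3*y3)
          (x0*y1 + x1*y0 - b*x2*y3 + b*x3*y2)
          (x0*y2 + x2*y0 + a*x1*y3 - a*x3*y1)
          (x0*y3 + x3*y0 + x1*y2 - x2*y1)"

fun qtr :: "quat \<Rightarrow> rat" where
  "qtr (Quat x0 x1 x2 x3) = 2 * x0"

fun qnorm :: "rat \<Rightarrow> rat \<Rightarrow> quat \<Rightarrow> rat" where
  "qnorm a b (Quat x0 x1 x2 x3) = x0^2 - a*x1^2 - b*x2^2 + a*b*x3^2"

definition qdisc :: "rat \<Rightarrow> rat \<Rightarrow> quat \<Rightarrow> rat" where
  "qdisc a b x = (qtr x)^2 - 4 * qnorm a b x"

text \<open>Ramification.  H = (a,b)_Q is ramified at a place v iff H \<otimes> Q_v is a division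
  algebra iff the reduced norm form is anisotropic over Q_v.\<close>

definition ram_infty :: "rat \<Rightarrow> rat \<Rightarrow> bool" where
  "ram_infty a b \<longleftrightarrow>
     \<not> (\<exists>x0 x1 x2 x3 :: real. (x0 \<noteq> 0 \<or> x1 \<noteq> 0 \<or> x2 \<noteq> 0 \<or> x3 \<noteq> 0) \<and>
          x0^2 - real_of_rat a * x1^2 - real_of_rat b * x2^2
            + real_of_rat a * real_of_rat b * x3^2 = 0)"

definition padic_dvd :: "int \<Rightarrow> nat \<Rightarrow> rat \<Rightarrow> bool" where
  "padic_dvd l n q \<longleftrightarrow> (\<exists>r s :: int. \<not> l dvd s \<and> q = of_int (l^n) * of_int r / of_int s)"

text \<open>The norm form is isotropic over Q_l iff it has a primitive zero in Z_l^4 iff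
  (by compactness of the primitive vectors in Z_l^4 and density of Z in Z_l)
  for every n there is a primitive integer vector whose norm has l-adic valuation \<ge> n.\<close>
definition ram_at :: "rat \<Rightarrow> rat \<Rightarrow> int \<Rightarrow> bool" where
  "ram_at a b l \<longleftrightarrow>
     \<not> (\<forall>n::nat. \<exists>x0 x1 x2 x3 :: int.
            \<not> (l dvd x0 \<and> l dvd x1 \<and> l dvd x2 \<and> l dvd x3) \<and>
            padic_dvd l n (qnorm a b (Quat (of_int x0) (of_int x1) (of_int x2) (of_int x3))))"

definition ramified_exactly_at :: "rat \<Rightarrow> rat \<Rightarrow> int \<Rightarrow> bool" where
  "ramified_exactly_at a b p \<longleftrightarrow>
     a \<noteq> 0 \<and> b \<noteq> 0 \<and> ram_infty a b \<and> (\<forall>l::int. prime l \<longrightarrow> (ram_at a b l \<longleftrightarrow> l = p))"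

definition qcomb :: "quat \<Rightarrow> quat \<Rightarrow> quat \<Rightarrow> quat \<Rightarrow> rat \<Rightarrow> rat \<Rightarrow> rat \<Rightarrow> rat \<Rightarrow> quat" where
  "qcomb v0 v1 v2 v3 c0 c1 c2 c3 =
     qadd (qadd (qsmul c0 v0) (qsmul c1 v1)) (qadd (qsmul c2 v2) (qsmul c3 v3))"

definition qindep :: "quat \<Rightarrow> quat \<Rightarrow> quat \<Rightarrow> quat \<Rightarrow> bool" where
  "qindep v0 v1 v2 v3 \<longleftrightarrow>
     (\<forall>c0 c1 c2 c3. qcomb v0 v1 v2 v3 c0 c1 c2 c3 = qzero \<longrightarrow>
        c0 = 0 \<and> c1 = 0 \<and> c2 = 0 \<and> c3 = 0)"

definition is_lattice :: "quat set \<Rightarrow> bool" where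
  "is_lattice L \<longleftrightarrow> (\<exists>v0 v1 v2 v3. qindep v0 v1 v2 v3 \<and>
     L = {qcomb v0 v1 v2 v3 (of_int n0) (of_int n1) (of_int n2) (of_int n3) | n0 n1 n2 n3. True})"

definition is_order :: "rat \<Rightarrow> rat \<Rightarrow> quat set \<Rightarrow> bool" where
  "is_order a b R \<longleftrightarrow> is_lattice R \<and> qone \<in> R \<and> (\<forall>x\<in>R. \<forall>y\<in>R. qmul a b x y \<in> R)"

definition is_maximal_order :: "rat \<Rightarrow> rat \<Rightarrow> quat set \<Rightarrow> bool" where
  "is_maximal_order a b R \<longleftrightarrow> is_order a b R \<and> (\<forall>R'. is_order a b R' \<and> R \<subseteq> R' \<longrightarrow> R' = R)"

definition tilde_order :: "rat \<Rightarrow> rat \<Rightarrow> int \<Rightarrow> quat set \<Rightarrow> quat set" where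
  "tilde_order a b p R = {x \<in> R. \<exists>k::int. qdisc a b x = of_int p * of_int k}"

definition lattice_index :: "quat set \<Rightarrow> quat set \<Rightarrow> nat" where
  "lattice_index M L = card ((\<lambda>x. (\<lambda>y. qadd x y) ` L) ` M)"

end

(* Since the algebra is ramified at p, its norm form is anisotropic over Q_p, and Hensel's
   lemma turns this into two facts: an element of p-integral norm has p-integral trace, and
   some element has norm of p-adic valuation exactly 1.  The first makes "p-integral norm"
   closed under addition, and maximality of Om then shows that Om contains, up to a factor
   prime to p, every element of p-integral norm.  Hence the ideal P of elements of Om with norm
   divisible by p satisfies P * P <= p Om, and, p being odd, the tilde order is Z + P.

   If Z + p Om <= L <= Z + P, products of elements of L lie in Z + L + P * P <= L, so L is an
   order.  Conversely, let L be an order of index p.  Then p (Z + P) <= L.  If p y were not in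
   L for some y in Om, then Z + P = L + Z p y, which forces P * P <= L; for a uniformizer pi
   this puts N(pi) y = pi (conj pi y) into L, and as N(pi) = p m with m prime to p, p y would
   lie in L after all. *)

theory Submission
  imports Defs "Jordan_Normal_Form.Determinant"
begin

section \<open>Quaternion arithmetic\<close>

instantiation quat :: ab_group_add
begin
definition zero_quat_def: "0 = qzero"
definition plus_quat_def: "x + y = qadd x y"
fun uminus_quat :: "quat \<Rightarrow> quat" where
  "uminus_quat (Quat x0 x1 x2 x3) = Quat (-x0) (-x1) (-x2) (-x3)"
definition minus_quat_def: "(x::quat) - y = x + (- y)"
instance
proof
  fix x y z :: quat
  show "x + y + z = x + (y + z)" by (cases x; cases y; cases z) (simp add: plus_quat_def algebra_simps)
  show "x + y = y + x" by (cases x; cases y) (simp add: plus_quat_def algebra_simps)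
  show "0 + x = x" by (cases x) (simp add: plus_quat_def zero_quat_def qzero_def)
  show "- x + x = 0" by (cases x) (simp add: plus_quat_def zero_quat_def qzero_def)
  show "x - y = x + - y" by (simp add: minus_quat_def)
qed
end

lemma quat_plus [simp]: "Quat x0 x1 x2 x3 + Quat y0 y1 y2 y3 = Quat (x0+y0) (x1+y1) (x2+y2) (x3+y3)"
  by (simp add: plus_quat_def)

lemma quat_minus [simp]: "Quat x0 x1 x2 x3 - Quat y0 y1 y2 y3 = Quat (x0-y0) (x1-y1) (x2-y2) (x3-y3)"
  by (simp add: minus_quat_def)

lemma zero_quat_eq: "(0::quat) = Quat 0 0 0 0"
  by (simp add: zero_quat_def qzero_def)

lemma qadd_eq_plus: "qadd x y = x + y"
  by (simp add: plus_quat_def)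

lemma qzero_eq_zero: "qzero = 0"
  by (simp add: zero_quat_def)

definition qof_rat :: "rat \<Rightarrow> quat" where "qof_rat r = Quat r 0 0 0"

fun qconj :: "quat \<Rightarrow> quat" where "qconj (Quat x0 x1 x2 x3) = Quat x0 (-x1) (-x2) (-x3)"

lemma qof_int_eq: "qof_int n = qof_rat (of_int n)" by (simp add: qof_int_def qof_rat_def)
lemma qone_eq: "qone = qof_rat 1" by (simp add: qone_def qof_rat_def)
lemma qof_rat_eq_qsmul_qone: "qof_rat r = qsmul r qone" by (simp add: qof_rat_def qone_def)
lemma qof_rat_add: "qof_rat (r + s) = qof_rat r + qof_rat s" by (simp add: qof_rat_def)
lemma qof_rat_0: "qof_rat 0 = 0" by (simp add: qof_rat_def zero_quat_eq)

lemma qsmul_add: "qsmul c (x + y) = qsmul c x + qsmul c y"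
  by (cases x; cases y) (simp add: algebra_simps)
lemma qsmul_add_left: "qsmul (c + d) x = qsmul c x + qsmul d x"
  by (cases x) (simp add: algebra_simps)
lemma qsmul_diff_left: "qsmul (c - d) x = qsmul c x - qsmul d x"
  by (cases x) (simp add: algebra_simps)
lemma qsmul_qsmul: "qsmul c (qsmul d x) = qsmul (c * d) x"
  by (cases x) (simp add: algebra_simps)
lemma qsmul_one: "qsmul 1 x = x" by (cases x) simp
lemma qsmul_zero_left: "qsmul 0 x = 0" by (cases x) (simp add: zero_quat_eq)
lemma qsmul_zero: "qsmul c 0 = 0" by (simp add: zero_quat_eq)
lemma qsmul_minus_left: "qsmul (- c) x = - qsmul c x" by (cases x) simp
lemma qsmul_qof_rat: "qsmul c (qof_rat r) = qof_rat (c * r)" by (simp add: qof_rat_def)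

context
  fixes a b :: rat
begin

lemma qmul_assoc: "qmul a b (qmul a b x y) z = qmul a b x (qmul a b y z)"
  by (cases x; cases y; cases z) (simp add: algebra_simps)
lemma qmul_add_left: "qmul a b (x + y) z = qmul a b x z + qmul a b y z"
  by (cases x; cases y; cases z) (simp add: algebra_simps)
lemma qmul_add_right: "qmul a b x (y + z) = qmul a b x y + qmul a b x z"
  by (cases x; cases y; cases z) (simp add: algebra_simps)
lemma qmul_qsmul_left: "qmul a b (qsmul c x) z = qsmul c (qmul a b x z)"
  by (cases x; cases z) (simp add: algebra_simps)
lemma qmul_qsmul_right: "qmul a b x (qsmul c z) = qsmul c (qmul a b x z)"
  by (cases x; cases z) (simp add: algebra_simps)
lemma qmul_qof_rat_left: "qmul a b (qof_rat r) z = qsmul r z"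
  by (cases z) (simp add: qof_rat_def)
lemma qmul_qof_rat_right: "qmul a b z (qof_rat r) = qsmul r z"
  by (cases z) (simp add: qof_rat_def algebra_simps)

lemma qnorm_qmul: "qnorm a b (qmul a b x y) = qnorm a b x * qnorm a b y"
  by (cases x; cases y) (simp add: algebra_simps power2_eq_square)
lemma qnorm_qsmul: "qnorm a b (qsmul c x) = c^2 * qnorm a b x"
  by (cases x) (simp add: algebra_simps power2_eq_square)
lemma qnorm_uminus: "qnorm a b (- x) = qnorm a b x"
  by (cases x) (simp add: algebra_simps power2_eq_square)
lemma qnorm_qconj: "qnorm a b (qconj x) = qnorm a b x"
  by (cases x) simp
lemma qnorm_add: "qnorm a b (x + y) = qnorm a b x + qnorm a b y + qtr (qmul a b x (qconj y))"
  by (cases x; cases y) (simp add: algebra_simps power2_eq_square)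
lemma qnorm_diff_qof_rat: "qnorm a b (x - qof_rat r) = r^2 - r * qtr x + qnorm a b x"
  by (cases x) (simp add: qof_rat_def algebra_simps power2_eq_square)
lemma qnorm_add_qof_rat: "qnorm a b (x + qof_rat r) = r^2 + r * qtr x + qnorm a b x"
  by (cases x) (simp add: qof_rat_def algebra_simps power2_eq_square)
lemma qmul_qconj: "qmul a b x (qconj x) = qof_rat (qnorm a b x)"
  by (cases x) (simp add: qof_rat_def algebra_simps power2_eq_square)
lemma qmul_self: "qmul a b x x = qsmul (qtr x) x - qof_rat (qnorm a b x)"
  by (cases x) (simp add: qof_rat_def algebra_simps power2_eq_square)

lemma qtr_diff: "qtr (x - y) = qtr x - qtr y"
  by (cases x; cases y) (simp add: algebra_simps)
lemma qtr_qsmul: "qtr (qsmul c x) = c * qtr x" by (cases x) simp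
lemma qtr_qof_rat: "qtr (qof_rat r) = 2 * r" by (simp add: qof_rat_def)
lemma qconj_eq: "qconj x = qof_rat (qtr x) - x"
  by (cases x) (simp add: qof_rat_def)

lemma qdisc_add_qof_rat: "qdisc a b (qof_rat r + x) = qdisc a b x"
  by (cases x) (simp add: qdisc_def qof_rat_def algebra_simps power2_eq_square)
lemma qdisc_diff_qof_rat: "qdisc a b (x - qof_rat r) = qdisc a b x"
  by (cases x) (simp add: qdisc_def qof_rat_def algebra_simps power2_eq_square)

end

section \<open>Coordinates and lattices\<close>

fun qcoord :: "quat \<Rightarrow> nat \<Rightarrow> rat" where
  "qcoord (Quat x0 x1 x2 x3) i = (if i = 0 then x0 else if i = 1 then x1 else if i = 2 then x2 else x3)"

lemma less_4_cases: "m < (4::nat) \<Longrightarrow> m = 0 \<or> m = 1 \<or> m = 2 \<or> m = 3"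
  by auto

lemma all_less_4: "(\<forall>i<4::nat. P i) \<longleftrightarrow> P 0 \<and> P 1 \<and> P 2 \<and> P 3"
  by (auto simp: numeral_eq_Suc less_Suc_eq)

lemma quat_eq_iff_qcoord: "x = y \<longleftrightarrow> (\<forall>i<4. qcoord x i = qcoord y i)"
proof
  assume "\<forall>i<4. qcoord x i = qcoord y i"
  then have "qcoord x 0 = qcoord y 0" "qcoord x 1 = qcoord y 1" "qcoord x 2 = qcoord y 2" "qcoord x 3 = qcoord y 3"
    by auto
  then show "x = y" by (cases x; cases y) auto
qed simp

lemma qcoord_qcomb:
  "i < 4 \<Longrightarrow> qcoord (qcomb v0 v1 v2 v3 c0 c1 c2 c3) i =
     c0 * qcoord v0 i + c1 * qcoord v1 i + c2 * qcoord v2 i + c3 * qcoord v3 i"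
  by (cases v0; cases v1; cases v2; cases v3) (auto simp: qcomb_def qadd_eq_plus)

lemma qcomb_add:
  "qcomb v0 v1 v2 v3 c0 c1 c2 c3 + qcomb v0 v1 v2 v3 d0 d1 d2 d3 =
   qcomb v0 v1 v2 v3 (c0+d0) (c1+d1) (c2+d2) (c3+d3)"
  by (simp add: qcomb_def qadd_eq_plus qsmul_add_left algebra_simps)
lemma qcomb_diff:
  "qcomb v0 v1 v2 v3 c0 c1 c2 c3 - qcomb v0 v1 v2 v3 d0 d1 d2 d3 =
   qcomb v0 v1 v2 v3 (c0-d0) (c1-d1) (c2-d2) (c3-d3)"
  by (simp add: qcomb_def qadd_eq_plus qsmul_diff_left algebra_simps)
lemma qsmul_qcomb:
  "qsmul k (qcomb v0 v1 v2 v3 c0 c1 c2 c3) = qcomb v0 v1 v2 v3 (k*c0) (k*c1) (k*c2) (k*c3)"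
  by (simp add: qcomb_def qadd_eq_plus qsmul_add qsmul_qsmul)
lemma qcomb_zero: "qcomb v0 v1 v2 v3 0 0 0 0 = 0"
  by (simp add: qcomb_def qadd_eq_plus qsmul_zero_left)

lemma qcomb_unique:
  assumes "qindep v0 v1 v2 v3" "qcomb v0 v1 v2 v3 c0 c1 c2 c3 = qcomb v0 v1 v2 v3 d0 d1 d2 d3"
  shows "c0 = d0 \<and> c1 = d1 \<and> c2 = d2 \<and> c3 = d3"
proof -
  have "qcomb v0 v1 v2 v3 (c0-d0) (c1-d1) (c2-d2) (c3-d3) = qzero"
    using assms(2) by (simp flip: qcomb_diff add: qzero_eq_zero)
  then show ?thesis using assms(1) unfolding qindep_def by fastforce
qed

lemma qindep_spans:
  assumes "qindep v0 v1 v2 v3"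
  shows "\<exists>c0 c1 c2 c3. y = qcomb v0 v1 v2 v3 c0 c1 c2 c3"
proof -
  define A where "A = mat 4 4 (\<lambda>(i,j). qcoord ([v0,v1,v2,v3] ! j) i)"
  have A: "A \<in> carrier_mat 4 4" by (simp add: A_def)
  have sum4: "(\<Sum>j<4::nat. f j) = f 0 + f 1 + f 2 + (f 3 :: rat)" for f
    by (simp add: eval_nat_numeral add.assoc)
  have mult_vec: "(A *\<^sub>v c) $ i = qcoord (qcomb v0 v1 v2 v3 (c$0) (c$1) (c$2) (c$3)) i"
    if "i < 4" "c \<in> carrier_vec 4" for c i
    using that by (simp add: A_def qcoord_qcomb scalar_prod_def atLeast0LessThan sum4 row_def algebra_simps)
  have "det A \<noteq> 0"
  proof
    assume "det A = 0"
    then obtain c where c: "c \<in> carrier_vec 4" "c \<noteq> 0\<^sub>v 4" "A *\<^sub>v c = 0\<^sub>v 4"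
      using det_0_iff_vec_prod_zero_field[OF A] by auto
    have "qcomb v0 v1 v2 v3 (c$0) (c$1) (c$2) (c$3) = qzero"
      unfolding qzero_eq_zero quat_eq_iff_qcoord
    proof (intro allI impI)
      fix i :: nat assume i: "i < 4"
      have "(A *\<^sub>v c) $ i = 0" using c(3) i by simp
      then show "qcoord (qcomb v0 v1 v2 v3 (c$0) (c$1) (c$2) (c$3)) i = qcoord 0 i"
        using mult_vec[OF i c(1)] by (simp add: zero_quat_eq)
    qed
    then have "c$0 = 0" "c$1 = 0" "c$2 = 0" "c$3 = 0"
      using assms unfolding qindep_def by blast+
    then have "c = 0\<^sub>v 4"
      using c(1) by (intro eq_vecI) (auto dest!: less_4_cases)
    with c(2) show False by simp
  qed
  then have "A \<in> Units (ring_mat TYPE(rat) 4 ())"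
    using det_non_zero_imp_unit[OF A, of "()"] by blast
  then obtain B where B: "B \<in> carrier_mat 4 4" "A * B = 1\<^sub>m 4"
    unfolding Units_def ring_mat_def by auto
  define c where "c = B *\<^sub>v vec 4 (qcoord y)"
  have c: "c \<in> carrier_vec 4" using B(1) by (simp add: c_def carrier_vecI)
  have "A *\<^sub>v c = (A * B) *\<^sub>v vec 4 (qcoord y)"
    unfolding c_def using A B by (intro assoc_mult_mat_vec[symmetric]) auto
  also have "\<dots> = vec 4 (qcoord y)" using B by simp
  finally have "y = qcomb v0 v1 v2 v3 (c$0) (c$1) (c$2) (c$3)"
    unfolding quat_eq_iff_qcoord using mult_vec[OF _ c] by (metis index_vec)
  then show ?thesis by blast
qed

definition zspan :: "quat \<Rightarrow> quat \<Rightarrow> quat \<Rightarrow> quat \<Rightarrow> quat set" where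
  "zspan v0 v1 v2 v3 =
     {qcomb v0 v1 v2 v3 (of_int n0) (of_int n1) (of_int n2) (of_int n3) | n0 n1 n2 n3. True}"

lemma is_lattice_iff: "is_lattice L \<longleftrightarrow> (\<exists>v0 v1 v2 v3. qindep v0 v1 v2 v3 \<and> L = zspan v0 v1 v2 v3)"
  by (simp add: is_lattice_def zspan_def)

lemma zspan_memI:
  "c0 \<in> \<int> \<Longrightarrow> c1 \<in> \<int> \<Longrightarrow> c2 \<in> \<int> \<Longrightarrow> c3 \<in> \<int> \<Longrightarrow>
    qcomb v0 v1 v2 v3 c0 c1 c2 c3 \<in> zspan v0 v1 v2 v3"
  unfolding zspan_def by (auto elim!: Ints_cases)

lemma zspan_memE:
  assumes "x \<in> zspan v0 v1 v2 v3"
  obtains n0 n1 n2 n3 :: int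
  where "x = qcomb v0 v1 v2 v3 (of_int n0) (of_int n1) (of_int n2) (of_int n3)"
  using assms unfolding zspan_def by blast

lemma zspan_add: "x \<in> zspan v0 v1 v2 v3 \<Longrightarrow> y \<in> zspan v0 v1 v2 v3 \<Longrightarrow> x + y \<in> zspan v0 v1 v2 v3"
  by (elim zspan_memE) (simp add: qcomb_add zspan_memI)

lemma zspan_qsmul: "x \<in> zspan v0 v1 v2 v3 \<Longrightarrow> qsmul (of_int k) x \<in> zspan v0 v1 v2 v3"
  by (elim zspan_memE) (simp add: qsmul_qcomb zspan_memI)

context
  fixes L assumes L: "is_lattice L"
begin

lemma lattice_add: "x \<in> L \<Longrightarrow> y \<in> L \<Longrightarrow> x + y \<in> L"
  using L zspan_add unfolding is_lattice_iff by blast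

lemma lattice_qsmul: "x \<in> L \<Longrightarrow> qsmul (of_int k) x \<in> L"
  using L zspan_qsmul unfolding is_lattice_iff by blast

lemma lattice_zero: "0 \<in> L"
proof -
  obtain v0 v1 v2 v3 where "L = zspan v0 v1 v2 v3" using L unfolding is_lattice_iff by blast
  then show ?thesis using zspan_memI[of 0 0 0 0 v0 v1 v2 v3] by (simp add: qcomb_zero)
qed

lemma lattice_uminus: "x \<in> L \<Longrightarrow> - x \<in> L"
  using lattice_qsmul[of x "-1"] by (simp add: qsmul_minus_left qsmul_one)

lemma lattice_diff: "x \<in> L \<Longrightarrow> y \<in> L \<Longrightarrow> x - y \<in> L"
  using lattice_add[of x "- y"] lattice_uminus[of y] by simp

lemma lattice_sum: "finite A \<Longrightarrow> (\<And>x. x \<in> A \<Longrightarrow> f x \<in> L) \<Longrightarrow> sum f A \<in> L"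
  by (induction A rule: finite_induct) (simp_all add: lattice_zero lattice_add)

end

lemma common_denominator:
  fixes qs :: "rat list"
  shows "\<exists>d::int. d > 0 \<and> (\<forall>q\<in>set qs. of_int d * q \<in> \<int>)"
proof (induction qs)
  case Nil
  then show ?case by (intro exI[of _ 1]) auto
next
  case (Cons q qs)
  then obtain d where d: "d > 0" "\<forall>q\<in>set qs. of_int d * q \<in> \<int>" by blast
  obtain r s where "quotient_of q = (r, s)" by (cases "quotient_of q")
  then have s: "s > 0" "q = of_int r / of_int s"
    using quotient_of_denom_pos quotient_of_div by blast+
  have "of_int (d * s) * q = of_int (d * r)" using s by (simp add: field_simps)
  moreover have "of_int (d * s) * x = of_int s * (of_int d * x)" for x :: rat by simp
  ultimately have "\<forall>x\<in>set (q # qs). of_int (d * s) * x \<in> \<int>"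
    using d(2) by (metis Ints_mult Ints_of_int set_ConsD)
  then show ?case using d(1) s(1) by (intro exI[of _ "d * s"]) simp
qed

definition qintegral :: "quat \<Rightarrow> bool" where
  "qintegral x \<longleftrightarrow> (\<forall>i<4. qcoord x i \<in> \<int>)"

lemma qintegral_Quat: "qintegral (Quat x0 x1 x2 x3) \<longleftrightarrow> x0 \<in> \<int> \<and> x1 \<in> \<int> \<and> x2 \<in> \<int> \<and> x3 \<in> \<int>"
  unfolding qintegral_def all_less_4 by simp

lemma lattice_bounded_denominator:
  assumes "is_lattice L"
  shows "\<exists>D::int. D > 0 \<and> (\<forall>x\<in>L. qintegral (qsmul (of_int D) x))"
proof -
  obtain v0 v1 v2 v3 where L: "L = zspan v0 v1 v2 v3"
    using assms unfolding is_lattice_iff by blast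
  obtain D where D: "D > 0" "\<forall>q\<in>set (map (qcoord v0) [0..<4] @ map (qcoord v1) [0..<4] @
      map (qcoord v2) [0..<4] @ map (qcoord v3) [0..<4]). of_int D * q \<in> \<int>"
    using common_denominator by blast
  have v: "of_int D * qcoord v0 i \<in> \<int>" "of_int D * qcoord v1 i \<in> \<int>"
    "of_int D * qcoord v2 i \<in> \<int>" "of_int D * qcoord v3 i \<in> \<int>" if "i < 4" for i
    using that D(2) by auto
  have "qintegral (qsmul (of_int D) x)" if "x \<in> L" for x
  proof -
    obtain n0 n1 n2 n3 :: int
      where x: "x = qcomb v0 v1 v2 v3 (of_int n0) (of_int n1) (of_int n2) (of_int n3)"
      using \<open>x \<in> L\<close> L by (blast elim: zspan_memE)
    have "qcoord (qsmul (of_int D) x) i =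
        of_int n0 * (of_int D * qcoord v0 i) + of_int n1 * (of_int D * qcoord v1 i)
        + of_int n2 * (of_int D * qcoord v2 i) + of_int n3 * (of_int D * qcoord v3 i)" if "i < 4" for i
      unfolding x qsmul_qcomb qcoord_qcomb[OF that] by (simp add: algebra_simps)
    then show ?thesis unfolding qintegral_def using v by (simp add: Ints_add Ints_mult)
  qed
  then show ?thesis using D(1) by blast
qed

lemma lattice_contains_scaled_qintegral:
  assumes "is_lattice L"
  shows "\<exists>D::int. D > 0 \<and> (\<forall>x. qintegral x \<longrightarrow> qsmul (of_int D) x \<in> L)"
proof -
  obtain v0 v1 v2 v3 where ind: "qindep v0 v1 v2 v3" and L: "L = zspan v0 v1 v2 v3"
    using assms unfolding is_lattice_iff by blast
  define e :: "nat \<Rightarrow> quat" where "e i = [Quat 1 0 0 0, Quat 0 1 0 0, Quat 0 0 1 0, Quat 0 0 0 1] ! i" for i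
  have "\<forall>i. \<exists>c::nat \<Rightarrow> rat. i < 4 \<longrightarrow> e i = qcomb v0 v1 v2 v3 (c 0) (c 1) (c 2) (c 3)"
  proof
    fix i
    obtain c0 c1 c2 c3 where "e i = qcomb v0 v1 v2 v3 c0 c1 c2 c3" using qindep_spans[OF ind] by blast
    then show "\<exists>c::nat \<Rightarrow> rat. i < 4 \<longrightarrow> e i = qcomb v0 v1 v2 v3 (c 0) (c 1) (c 2) (c 3)"
      by (intro exI[of _ "\<lambda>j. [c0, c1, c2, c3] ! j"]) simp
  qed
  then obtain c :: "nat \<Rightarrow> nat \<Rightarrow> rat"
    where c: "\<And>i. i < 4 \<Longrightarrow> e i = qcomb v0 v1 v2 v3 (c i 0) (c i 1) (c i 2) (c i 3)"
    by metis
  obtain D where D: "D > 0"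
    "\<forall>q\<in>set (concat (map (\<lambda>i. map (c i) [0..<4]) [0..<4])). of_int D * q \<in> \<int>"
    using common_denominator by blast
  have De: "qsmul (of_int D) (e i) \<in> L" if "i < 4" for i
    unfolding c[OF that] qsmul_qcomb L using that D(2) by (intro zspan_memI) auto
  have "qsmul (of_int D) x \<in> L" if "qintegral x" for x
  proof -
    obtain x0 x1 x2 x3 where x: "x = Quat x0 x1 x2 x3" by (cases x)
    then obtain n0 n1 n2 n3 where n: "x0 = of_int n0" "x1 = of_int n1" "x2 = of_int n2" "x3 = of_int n3"
      using \<open>qintegral x\<close> unfolding x qintegral_Quat by (auto elim!: Ints_cases)
    have "qsmul (of_int D) x = qsmul (of_int n0) (qsmul (of_int D) (e 0)) + qsmul (of_int n1) (qsmul (of_int D) (e 1))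
        + qsmul (of_int n2) (qsmul (of_int D) (e 2)) + qsmul (of_int n3) (qsmul (of_int D) (e 3))"
      unfolding x n e_def by (simp add: algebra_simps)
    also have "\<dots> \<in> L"
      using lattice_qsmul[OF assms De] by (intro lattice_add[OF assms]) auto
    finally show ?thesis .
  qed
  then show ?thesis using D(1) by blast
qed

lemma int_valued_additive_generator:
  fixes H :: "quat set" and f :: "quat \<Rightarrow> rat"
  assumes add: "\<And>x y. x \<in> H \<Longrightarrow> y \<in> H \<Longrightarrow> x + y \<in> H"
    and smul: "\<And>x k. x \<in> H \<Longrightarrow> qsmul (of_int k) x \<in> H"
    and f_add: "\<And>x y. x \<in> H \<Longrightarrow> y \<in> H \<Longrightarrow> f (x + y) = f x + f y"
    and f_smul: "\<And>x k. x \<in> H \<Longrightarrow> f (qsmul (of_int k) x) = of_int k * f x"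
    and f_Ints: "\<And>x. x \<in> H \<Longrightarrow> f x \<in> \<int>"
    and y: "y \<in> H" "f y \<noteq> 0"
  shows "\<exists>g\<in>H. f g > 0 \<and> (\<forall>x\<in>H. \<exists>k::int. f x = of_int k * f g)"
proof -
  define S where "S = {n::nat. n > 0 \<and> (\<exists>x\<in>H. f x = of_nat n)}"
  obtain n where n: "f y = of_int n" using f_Ints[OF y(1)] by (auto elim: Ints_cases)
  have "f (qsmul (of_int (sgn n)) y) = of_int (sgn n * n)"
    using f_smul[OF y(1)] n by simp
  also have "sgn n * n = int (nat \<bar>n\<bar>)" by (auto simp: sgn_if)
  finally have "f (qsmul (of_int (sgn n)) y) = of_nat (nat \<bar>n\<bar>)" by simp
  then have "nat \<bar>n\<bar> \<in> S" unfolding S_def using y n smul by fastforce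
  define d where "d = Least (\<lambda>n. n \<in> S)"
  have "d \<in> S" unfolding d_def using \<open>nat \<bar>n\<bar> \<in> S\<close> by (rule LeastI)
  then obtain g where g: "g \<in> H" "f g = of_nat d" "d > 0" unfolding S_def by blast
  have "\<exists>k::int. f x = of_int k * f g" if x: "x \<in> H" for x
  proof -
    obtain m where m: "f x = of_int m" using f_Ints[OF x] by (auto elim: Ints_cases)
    define q r where "q = m div int d" and "r = m mod int d"
    have m_eq: "m = q * int d + r" and r: "0 \<le> r" "r < int d"
      using g(3) unfolding q_def r_def by auto
    have "x + qsmul (of_int (- q)) g \<in> H" using add[OF x smul[OF g(1)]] .
    moreover have "f (x + qsmul (of_int (- q)) g) = of_int r"
      using f_add[OF x smul[OF g(1), of "- q"]] f_smul[OF g(1), of "- q"]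
      unfolding m g(2) m_eq by simp
    ultimately have "r = 0"
    proof (rule_tac ccontr)
      assume "x + qsmul (of_int (- q)) g \<in> H" "f (x + qsmul (of_int (- q)) g) = of_int r" "r \<noteq> 0"
      then have "nat r \<in> S" unfolding S_def using r by auto
      then have "d \<le> nat r" unfolding d_def by (rule Least_le)
      then show False using r by simp
    qed
    then show ?thesis using m m_eq g(2) by (intro exI[of _ q]) simp
  qed
  then show ?thesis using g by (intro bexI[of _ g]) auto
qed

locale qbasis =
  fixes v0 v1 v2 v3 :: quat
  assumes indep: "qindep v0 v1 v2 v3"
begin

definition coord :: "quat \<Rightarrow> nat \<Rightarrow> rat" where
  "coord x = (SOME c. x = qcomb v0 v1 v2 v3 (c 0) (c 1) (c 2) (c 3))"

lemma qcomb_coord: "x = qcomb v0 v1 v2 v3 (coord x 0) (coord x 1) (coord x 2) (coord x 3)"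
proof -
  obtain c0 c1 c2 c3 where "x = qcomb v0 v1 v2 v3 c0 c1 c2 c3" using qindep_spans[OF indep] by blast
  then have "\<exists>c::nat \<Rightarrow> rat. x = qcomb v0 v1 v2 v3 (c 0) (c 1) (c 2) (c 3)"
    by (intro exI[of _ "\<lambda>i. [c0, c1, c2, c3] ! i"]) simp
  then show ?thesis unfolding coord_def by (rule someI_ex)
qed

lemma coord_unique:
  assumes "x = qcomb v0 v1 v2 v3 c0 c1 c2 c3"
  shows "coord x 0 = c0" "coord x 1 = c1" "coord x 2 = c2" "coord x 3 = c3"
  using qcomb_unique[OF indep trans[OF qcomb_coord[symmetric] assms]] by auto

lemma coord_add: "i < 4 \<Longrightarrow> coord (x + y) i = coord x i + coord y i"
  using coord_unique[OF trans[OF arg_cong2[OF qcomb_coord qcomb_coord, of "(+)" x y] qcomb_add]]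
  by (auto dest!: less_4_cases)

lemma coord_qsmul: "i < 4 \<Longrightarrow> coord (qsmul r x) i = r * coord x i"
  using coord_unique[OF trans[OF arg_cong[OF qcomb_coord, of "qsmul r" x] qsmul_qcomb]]
  by (auto dest!: less_4_cases)

lemma coord_diff: "i < 4 \<Longrightarrow> coord (x - y) i = coord x i - coord y i"
  using coord_add[of i "x - y" y] by simp

lemma coords_zero_imp_zero:
  assumes "\<forall>i<4. coord x i = 0"
  shows "x = 0"
proof -
  have "x = qcomb v0 v1 v2 v3 (coord x 0) (coord x 1) (coord x 2) (coord x 3)"
    by (rule qcomb_coord)
  also have "\<dots> = 0" using assms by (simp add: all_less_4 qcomb_zero)
  finally show ?thesis .
qed

lemma coord_zspan_Ints:
  assumes "x \<in> zspan v0 v1 v2 v3" "i < 4"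
  shows "coord x i \<in> \<int>"
proof -
  obtain n0 n1 n2 n3 :: int
    where "x = qcomb v0 v1 v2 v3 (of_int n0) (of_int n1) (of_int n2) (of_int n3)"
    using assms(1) by (rule zspan_memE)
  from coord_unique[OF this] show ?thesis using assms(2) by (auto dest!: less_4_cases)
qed

lemma coord_basis:
  assumes "i < 4" "j < 4"
  shows "coord ([v0, v1, v2, v3] ! i) j = of_bool (i = j)"
proof -
  have "[v0, v1, v2, v3] ! i =
      qcomb v0 v1 v2 v3 (of_bool (i = 0)) (of_bool (i = 1)) (of_bool (i = 2)) (of_bool (i = 3))"
    using less_4_cases[OF assms(1)]
    by (elim disjE) (simp_all add: qcomb_def qadd_eq_plus qsmul_zero_left qsmul_one)
  from coord_unique[OF this] show ?thesis
    using less_4_cases[OF assms(2)] by (elim disjE) simp_all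
qed

lemma qindep_if_triangular:
  assumes "\<And>i j. i < j \<Longrightarrow> j < 4 \<Longrightarrow> coord (g i) j = 0"
    and "\<And>i. i < 4 \<Longrightarrow> coord (g i) i \<noteq> 0"
  shows "qindep (g 0) (g 1) (g 2) (g 3)"
  unfolding qindep_def
proof (intro allI impI)
  fix c0 c1 c2 c3
  assume "qcomb (g 0) (g 1) (g 2) (g 3) c0 c1 c2 c3 = qzero"
  then have "coord (qcomb (g 0) (g 1) (g 2) (g 3) c0 c1 c2 c3) j = 0" if "j < 4" for j
    using coord_qsmul[OF that, of 0 0] by (simp add: qzero_eq_zero qsmul_zero)
  then have z: "c0 * coord (g 0) j + c1 * coord (g 1) j + c2 * coord (g 2) j + c3 * coord (g 3) j = 0"
    if "j < 4" for j
    using that by (simp add: qcomb_def qadd_eq_plus coord_add coord_qsmul add.assoc)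
  have "c3 = 0" using z[of 3] assms by simp
  moreover have "c2 = 0" using z[of 2] assms \<open>c3 = 0\<close> by simp
  moreover have "c1 = 0" using z[of 1] assms \<open>c3 = 0\<close> \<open>c2 = 0\<close> by simp
  moreover have "c0 = 0" using z[of 0] assms \<open>c3 = 0\<close> \<open>c2 = 0\<close> \<open>c1 = 0\<close> by simp
  ultimately show "c0 = 0 \<and> c1 = 0 \<and> c2 = 0 \<and> c3 = 0" by blast
qed

definition vanishing_from :: "quat set \<Rightarrow> nat \<Rightarrow> quat set" where
  "vanishing_from G i = {x \<in> G. \<forall>j. i \<le> j \<and> j < 4 \<longrightarrow> coord x j = 0}"

context
  fixes G :: "quat set" and m :: int
  assumes add: "\<And>x y. x \<in> G \<Longrightarrow> y \<in> G \<Longrightarrow> x + y \<in> G"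
    and smul: "\<And>x k. x \<in> G \<Longrightarrow> qsmul (of_int k) x \<in> G"
    and lower: "zspan v0 v1 v2 v3 \<subseteq> G"
    and upper: "\<And>x. x \<in> G \<Longrightarrow> qsmul (of_int m) x \<in> zspan v0 v1 v2 v3"
    and "m \<noteq> 0"
begin

lemma vanishing_from_add:
  "x \<in> vanishing_from G i \<Longrightarrow> y \<in> vanishing_from G i \<Longrightarrow> x + y \<in> vanishing_from G i"
  using add unfolding vanishing_from_def by (auto simp: coord_add)

lemma vanishing_from_qsmul: "x \<in> vanishing_from G i \<Longrightarrow> qsmul (of_int k) x \<in> vanishing_from G i"
  using smul unfolding vanishing_from_def by (auto simp: coord_qsmul)

lemma exists_coord_generator:
  assumes i: "i < 4"
  shows "\<exists>g\<in>vanishing_from G (i + 1). coord g i \<noteq> 0 \<and>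
           (\<forall>x\<in>vanishing_from G (i + 1). \<exists>k::int. coord x i = of_int k * coord g i)"
proof -
  have "[v0, v1, v2, v3] ! i \<in> G"
    using lower zspan_memI[of "of_bool (i = 0)" "of_bool (i = 1)" "of_bool (i = 2)" "of_bool (i = 3)" v0 v1 v2 v3] i
    by (auto dest!: less_4_cases simp: qcomb_def qadd_eq_plus qsmul_zero_left qsmul_one)
  then have v: "[v0, v1, v2, v3] ! i \<in> vanishing_from G (i + 1)"
    "of_int m * coord ([v0, v1, v2, v3] ! i) i \<noteq> 0"
    unfolding vanishing_from_def using i \<open>m \<noteq> 0\<close> by (auto simp: coord_basis)
  have int: "of_int m * coord x i \<in> \<int>" if "x \<in> vanishing_from G (i + 1)" for x
    using coord_zspan_Ints[OF upper i] that unfolding vanishing_from_def by (simp add: coord_qsmul[OF i])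
  have "\<exists>g\<in>vanishing_from G (i + 1). of_int m * coord g i > 0 \<and>
      (\<forall>x\<in>vanishing_from G (i + 1). \<exists>k::int. of_int m * coord x i = of_int k * (of_int m * coord g i))"
    by (rule int_valued_additive_generator[where f="\<lambda>x. of_int m * coord x i",
          OF vanishing_from_add vanishing_from_qsmul _ _ int v])
      (simp_all add: coord_add[OF i] coord_qsmul[OF i] algebra_simps)
  then obtain g where "g \<in> vanishing_from G (i + 1)" "of_int m * coord g i > 0"
    "\<forall>x\<in>vanishing_from G (i + 1). \<exists>k::int. of_int m * coord x i = of_int k * (of_int m * coord g i)"
    by blast
  then show ?thesis using \<open>m \<noteq> 0\<close> by (intro bexI[of _ g]) auto
qed

text \<open>A basis is found by Gaussian elimination over \<open>\<int>\<close>: \<open>g i\<close> generates the \<open>i\<close>-th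
  coordinates of the elements of \<open>G\<close> whose coordinates beyond \<open>i\<close> vanish.\<close>

lemma lattice_between: "is_lattice G"
proof -
  obtain g where g_vanish: "\<And>i. i < 4 \<Longrightarrow> g i \<in> vanishing_from G (i + 1)"
    and g_diag: "\<And>i. i < 4 \<Longrightarrow> coord (g i) i \<noteq> 0"
    and g_gen: "\<And>i x. i < 4 \<Longrightarrow> x \<in> vanishing_from G (i + 1) \<Longrightarrow>
      \<exists>k::int. coord x i = of_int k * coord (g i) i"
    using exists_coord_generator by metis
  have reduce: "\<exists>k::int. x - qsmul (of_int k) (g i) \<in> vanishing_from G i"
    if i: "i < 4" and x: "x \<in> vanishing_from G (i + 1)" for i x
  proof -
    obtain k where k: "coord x i = of_int k * coord (g i) i" using g_gen[OF i x] by blast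
    have "x - qsmul (of_int k) (g i) \<in> G"
      using add[of x "qsmul (of_int (- k)) (g i)"] smul[of "g i" "- k"] x g_vanish[OF i]
      unfolding vanishing_from_def by (simp add: qsmul_minus_left)
    moreover have "coord (x - qsmul (of_int k) (g i)) j = 0" if "i \<le> j" "j < 4" for j
      using that k i x g_vanish[OF i] unfolding vanishing_from_def
      by (cases "j = i") (simp_all add: coord_diff coord_qsmul)
    ultimately show ?thesis unfolding vanishing_from_def by blast
  qed
  have "G \<subseteq> zspan (g 0) (g 1) (g 2) (g 3)"
  proof
    fix x assume "x \<in> G"
    have succ: "(3::nat) + 1 = 4" "(2::nat) + 1 = 3" "(1::nat) + 1 = 2" "(0::nat) + 1 = 1" by simp_all
    have "vanishing_from G 4 = G" unfolding vanishing_from_def by auto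
    then obtain k3 where "x - qsmul (of_int k3) (g 3) \<in> vanishing_from G 3"
      using reduce[of 3] \<open>x \<in> G\<close> by auto
    then obtain k2 where "x - qsmul (of_int k3) (g 3) - qsmul (of_int k2) (g 2) \<in> vanishing_from G 2"
      using reduce[of 2, unfolded succ] by auto
    then obtain k1 where "x - qsmul (of_int k3) (g 3) - qsmul (of_int k2) (g 2) - qsmul (of_int k1) (g 1)
        \<in> vanishing_from G 1"
      using reduce[of 1, unfolded succ] by auto
    then obtain k0 where "x - qsmul (of_int k3) (g 3) - qsmul (of_int k2) (g 2) - qsmul (of_int k1) (g 1)
        - qsmul (of_int k0) (g 0) \<in> vanishing_from G 0"
      using reduce[of 0, unfolded succ] by auto
    then have "x - qsmul (of_int k3) (g 3) - qsmul (of_int k2) (g 2) - qsmul (of_int k1) (g 1)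
        - qsmul (of_int k0) (g 0) = 0"
      using coords_zero_imp_zero unfolding vanishing_from_def by blast
    then have "x = qcomb (g 0) (g 1) (g 2) (g 3) (of_int k0) (of_int k1) (of_int k2) (of_int k3)"
      unfolding qcomb_def qadd_eq_plus by (simp add: algebra_simps)
    then show "x \<in> zspan (g 0) (g 1) (g 2) (g 3)" by (simp add: zspan_memI)
  qed
  moreover have "zspan (g 0) (g 1) (g 2) (g 3) \<subseteq> G"
    using g_vanish add smul unfolding vanishing_from_def
    by (auto elim!: zspan_memE simp: qcomb_def qadd_eq_plus)
  moreover have "qindep (g 0) (g 1) (g 2) (g 3)"
    using g_vanish g_diag unfolding vanishing_from_def by (intro qindep_if_triangular) auto
  ultimately show ?thesis unfolding is_lattice_iff by blast
qed

end

end

section \<open>Divisibility by powers of \<open>p\<close> in \<open>\<rat>\<close>\<close>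

lemma padic_dvdE:
  assumes "padic_dvd p n x"
  obtains r s where "\<not> p dvd s" "x = of_int (p^n) * of_int r / of_int s"
  using assms unfolding padic_dvd_def by blast

locale prime_int =
  fixes p :: int
  assumes p_prime: "prime p"
begin

lemma p_not_dvd_one: "\<not> p dvd 1"
  using p_prime not_prime_unit by blast

lemma p_pos: "p > 0"
  using p_prime prime_gt_0_int by blast

lemma prime_not_dvd_mult: "\<not> p dvd s1 \<Longrightarrow> \<not> p dvd s2 \<Longrightarrow> \<not> p dvd (s1 * s2)"
  using p_prime by (simp add: prime_dvd_mult_iff)

lemma int_prime_power_decomp: "(x::int) \<noteq> 0 \<Longrightarrow> \<exists>k y. x = p^k * y \<and> \<not> p dvd y"
  using multiplicity_decompose'[of x p] p_prime not_prime_unit by metis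

lemma padic_dvdI:
  "\<not> p dvd s \<Longrightarrow> q = of_int (p^n) * of_int r / of_int s \<Longrightarrow> padic_dvd p n q"
  unfolding padic_dvd_def by blast

lemma padic_dvd_of_int: "p^n dvd k \<Longrightarrow> padic_dvd p n (of_int k)"
proof -
  assume "p^n dvd k"
  then obtain r where "k = p^n * r" by (auto elim: dvdE)
  then show ?thesis using p_not_dvd_one by (intro padic_dvdI[of 1 _ _ r]) auto
qed

lemma padic_dvd_zero: "padic_dvd p n 0"
  using padic_dvd_of_int[of n 0] by simp

lemma padic_dvd_Ints: "x \<in> \<int> \<Longrightarrow> padic_dvd p 0 x"
  using padic_dvd_of_int[of 0] by (auto elim!: Ints_cases)

lemma padic_dvd_add:
  assumes "padic_dvd p n x" "padic_dvd p n y"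
  shows "padic_dvd p n (x + y)"
proof -
  obtain r1 s1 where 1: "\<not> p dvd s1" "x = of_int (p^n) * of_int r1 / of_int s1"
    using assms(1) by (rule padic_dvdE)
  obtain r2 s2 where 2: "\<not> p dvd s2" "y = of_int (p^n) * of_int r2 / of_int s2"
    using assms(2) by (rule padic_dvdE)
  have "s1 \<noteq> 0" "s2 \<noteq> 0" using 1 2 by auto
  then have "x + y = of_int (p^n) * of_int (r1 * s2 + r2 * s1) / of_int (s1 * s2)"
    using 1 2 by (simp add: field_simps)
  then show ?thesis using prime_not_dvd_mult[OF 1(1) 2(1)] by (rule padic_dvdI[rotated])
qed

lemma padic_dvd_mult:
  assumes "padic_dvd p m x" "padic_dvd p n y"
  shows "padic_dvd p (m + n) (x * y)"
proof -
  obtain r1 s1 where 1: "\<not> p dvd s1" "x = of_int (p^m) * of_int r1 / of_int s1"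
    using assms(1) by (rule padic_dvdE)
  obtain r2 s2 where 2: "\<not> p dvd s2" "y = of_int (p^n) * of_int r2 / of_int s2"
    using assms(2) by (rule padic_dvdE)
  have "x * y = of_int (p^(m + n)) * of_int (r1 * r2) / of_int (s1 * s2)"
    using 1 2 by (simp add: power_add)
  then show ?thesis using prime_not_dvd_mult[OF 1(1) 2(1)] by (rule padic_dvdI[rotated])
qed

lemma padic_dvd_mult_of_int: "padic_dvd p n x \<Longrightarrow> padic_dvd p n (of_int k * x)"
  using padic_dvd_mult[OF padic_dvd_Ints[of "of_int k"]] by simp

lemma padic_dvd_uminus: "padic_dvd p n x \<Longrightarrow> padic_dvd p n (- x)"
  using padic_dvd_mult_of_int[of n x "-1"] by simp

lemma padic_dvd_diff: "padic_dvd p n x \<Longrightarrow> padic_dvd p n y \<Longrightarrow> padic_dvd p n (x - y)"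
  using padic_dvd_add[of n x "- y"] padic_dvd_uminus[of n y] by simp

lemma padic_dvd_mono:
  assumes "m \<le> n" "padic_dvd p n x"
  shows "padic_dvd p m x"
proof -
  obtain r s where rs: "\<not> p dvd s" "x = of_int (p^n) * of_int r / of_int s"
    using assms(2) by (rule padic_dvdE)
  have "p^n = p^m * p^(n - m)" using assms(1) by (simp flip: power_add)
  then have "x = of_int (p^m) * of_int (p^(n - m) * r) / of_int s" using rs by simp
  then show ?thesis using rs(1) by (rule padic_dvdI[rotated])
qed

lemma padic_dvd_cancel_power:
  assumes "padic_dvd p (n + E) (of_int (p^E) * x)"
  shows "padic_dvd p n x"
proof -
  obtain r s where rs: "\<not> p dvd s" "of_int (p^E) * x = of_int (p^(n + E)) * of_int r / of_int s"
    using assms by (rule padic_dvdE)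
  then have "of_int (p^E) * x = of_int (p^E) * (of_int (p^n) * of_int r / of_int s)"
    by (simp add: power_add algebra_simps)
  moreover have "(of_int (p^E) :: rat) \<noteq> 0" using p_pos by simp
  ultimately have "x = of_int (p^n) * of_int r / of_int s" by (metis mult_left_cancel)
  then show ?thesis using rs(1) by (rule padic_dvdI[rotated])
qed

lemma padic_dvd_mult_power: "padic_dvd p n x \<Longrightarrow> padic_dvd p (n + E) (of_int (p^E) * x)"
  using padic_dvd_mult[of n x E "of_int (p^E)"] padic_dvd_of_int[of E "p^E"]
  by (simp add: mult.commute add.commute)

lemma rat_prime_power_decomp:
  fixes q :: rat
  assumes "q \<noteq> 0"
  shows "\<exists>k m r s. \<not> p dvd r \<and> \<not> p dvd s \<and> q * of_int (p^m * s) = of_int (p^k * r)"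
proof -
  obtain r s where rs: "quotient_of q = (r, s)" by (cases "quotient_of q")
  then have s: "s > 0" "q = of_int r / of_int s" using quotient_of_denom_pos quotient_of_div by blast+
  have r0: "r \<noteq> 0" using s assms by auto
  obtain k r' where r: "r = p^k * r'" "\<not> p dvd r'" using int_prime_power_decomp[OF r0] by blast
  obtain m s' where s': "s = p^m * s'" "\<not> p dvd s'" using int_prime_power_decomp[of s] s(1) by auto
  have "q * of_int s = of_int r" using s by simp
  then have "q * of_int (p^m * s') = of_int (p^k * r')" using r s' by simp
  then show ?thesis using r s' by blast
qed

lemma padic_dvd_decomp_le:
  fixes q :: rat
  assumes "\<not> p dvd r" "\<not> p dvd s" "q * of_int (p^m * s) = of_int (p^k * r)" "padic_dvd p n q"
  shows "n + m \<le> k"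
proof (rule ccontr)
  assume ne: "\<not> n + m \<le> k"
  obtain r1 s1 where 1: "\<not> p dvd s1" "q = of_int (p^n) * of_int r1 / of_int s1"
    using assms(4) by (rule padic_dvdE)
  have s0: "s1 \<noteq> 0" using 1 by auto
  have "of_int (p^n * r1 * (p^m * s)) = (of_int (p^k * r * s1) :: rat)"
    using assms(3) 1(2) s0 by (simp add: field_simps)
  then have eq: "p^n * r1 * (p^m * s) = p^k * r * s1" by (simp only: of_int_eq_iff)
  define d where "d = n + m - k"
  have d: "d > 0" "n + m = k + d" using ne by (auto simp: d_def)
  have pk: "p^n * p^m = p^k * p^d" using d(2) by (simp add: power_add[symmetric])
  have "p^k * (p^d * r1 * s) = (p^n * p^m) * r1 * s" unfolding pk by (simp add: algebra_simps)
  also have "\<dots> = p^k * (r * s1)" using eq by (simp add: algebra_simps)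
  finally have "p^k * (p^d * r1 * s) = p^k * (r * s1)" .
  then have "p^d * r1 * s = r * s1" using p_pos by simp
  then have "p dvd r * s1" using d(1) by (metis dvd_mult2 dvd_power dvd_triv_left mult.assoc)
  then show False using prime_not_dvd_mult[OF assms(1) 1(1)] by simp
qed

lemma padic_dvd_decompI:
  fixes q :: rat
  assumes "\<not> p dvd s" "q * of_int (p^m * s) = of_int (p^k * r)" "n + m \<le> k"
  shows "padic_dvd p n q"
proof -
  have s0: "s \<noteq> 0" using assms(1) by auto
  have "p^k = p^n * p^(k - m - n) * p^m" using assms(3) by (simp add: power_add[symmetric])
  then have "q * of_int (p^m) * of_int s = of_int (p^n * p^(k - m - n) * r) * of_int (p^m)"
    using assms(2) by (simp add: algebra_simps)
  then have "q * of_int s = of_int (p^n * p^(k - m - n) * r)" using p_pos by simp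
  then have "q = of_int (p^n) * of_int (p^(k - m - n) * r) / of_int s" using s0 by (simp add: field_simps)
  then show ?thesis using assms(1) by (rule padic_dvdI[rotated])
qed

lemma padic_dvd_or_inverse:
  fixes q :: rat
  assumes "q \<noteq> 0"
  shows "padic_dvd p n q \<or> padic_dvd p 1 (of_int (p^n) / q)"
proof -
  obtain k m r s where decomp: "\<not> p dvd r" "\<not> p dvd s" "q * of_int (p^m * s) = of_int (p^k * r)"
    using rat_prime_power_decomp[OF assms] by blast
  show ?thesis
  proof (cases "n + m \<le> k")
    case True then show ?thesis using padic_dvd_decompI[OF decomp(2,3)] by blast
  next
    case False
    have r0: "r \<noteq> 0" using decomp by auto
    have "(of_int (p^n) / q) * of_int (p^k * r) = of_int (p^n) / q * (q * of_int (p^m * s))"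
      using decomp(3) by simp
    also have "\<dots> = of_int (p^(n+m) * s)" using assms by (simp add: power_add)
    finally have "(of_int (p^n) / q) * of_int (p^k * r) = of_int (p^(n+m) * s)" .
    then show ?thesis using False padic_dvd_decompI[OF decomp(1), of "of_int (p^n) / q" k "n+m" s 1] by simp
  qed
qed

lemma padic_integral_of_square:
  fixes q :: rat
  assumes "padic_dvd p 0 (q^2)"
  shows "padic_dvd p 0 q"
proof (cases "q = 0")
  case True then show ?thesis using padic_dvd_zero by simp
next
  case False
  obtain k m r s where decomp: "\<not> p dvd r" "\<not> p dvd s" "q * of_int (p^m * s) = of_int (p^k * r)"
    using rat_prime_power_decomp[OF False] by blast
  have "q^2 * of_int (p^(2*m) * s^2) = of_int (p^(2*k) * r^2)"
    using arg_cong[OF decomp(3), of "\<lambda>x. x^2"] by (simp add: power_mult_distrib power_mult mult.commute)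
  moreover have "\<not> p dvd r^2" "\<not> p dvd s^2" using decomp p_prime by (simp_all add: prime_dvd_power_iff)
  ultimately have "0 + 2*m \<le> 2*k" using padic_dvd_decomp_le assms by blast
  then show ?thesis using padic_dvd_decompI[OF decomp(2,3), of 0] by simp
qed

lemma padic_dvd_of_int_iff: "padic_dvd p n (of_int k) \<longleftrightarrow> p^n dvd k"
proof
  assume "padic_dvd p n (of_int k)"
  then obtain r s where 1: "\<not> p dvd s" "(of_int k :: rat) = of_int (p^n) * of_int r / of_int s"
    by (rule padic_dvdE)
  have "s \<noteq> 0" using 1 by auto
  then have "(of_int (k * s) :: rat) = of_int (p^n * r)" using 1(2) by (simp add: field_simps)
  then have "k * s = p^n * r" by (simp only: of_int_eq_iff)
  then have "p^n dvd k * s" by simp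
  moreover have "coprime (p^n) s" using 1(1) p_prime by (simp add: prime_imp_coprime)
  ultimately show "p^n dvd k" using coprime_dvd_mult_left_iff by blast
qed (rule padic_dvd_of_int)

lemma padic_unit_inverse:
  assumes "padic_dvd p 0 x" "\<not> padic_dvd p 1 x"
  shows "padic_dvd p 0 (1 / x)"
proof -
  have x0: "x \<noteq> 0" using assms(2) padic_dvd_zero by auto
  obtain k m r s where decomp: "\<not> p dvd r" "\<not> p dvd s" "x * of_int (p^m * s) = of_int (p^k * r)"
    using rat_prime_power_decomp[OF x0] by blast
  have "m \<le> k" using padic_dvd_decomp_le[OF decomp assms(1)] by simp
  moreover have "\<not> 1 + m \<le> k" using padic_dvd_decompI[OF decomp(2,3), of 1] assms(2) by auto
  ultimately have e: "k = m" by simp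
  have r0: "r \<noteq> 0" using decomp by auto
  have "x * of_int s = of_int r" using decomp(3) e p_pos by simp
  then have "1 / x = of_int (p^0) * of_int s / of_int r" using x0 r0 by (simp add: field_simps)
  then show ?thesis using decomp(1) by (rule padic_dvdI[rotated])
qed

lemma padic_integral_approx_int:
  assumes "padic_dvd p 0 x"
  shows "\<exists>A::int. padic_dvd p 1 (x - of_int A)"
proof -
  obtain r s where 1: "\<not> p dvd s" "x = of_int (p^0) * of_int r / of_int s"
    using assms by (rule padic_dvdE)
  have "coprime s p" using 1(1) p_prime by (simp add: prime_imp_coprime coprime_commute)
  then have "gcd s p = 1" by simp
  then obtain u v where uv: "u * s + v * p = 1" using bezout_int[of s p] by auto
  have s0: "s \<noteq> 0" using 1 by auto
  have uv': "(of_int u :: rat) * of_int s = 1 - of_int v * of_int p" using uv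
    by (metis add_diff_cancel_right' of_int_1 of_int_add of_int_mult)
  have "x - of_int (r * u) = of_int r * (1 - of_int u * of_int s) / of_int s"
    using 1(2) s0 by (simp add: field_simps)
  also have "\<dots> = of_int (p^1) * of_int (r * v) / of_int s" unfolding uv' by (simp add: algebra_simps)
  finally have "x - of_int (r * u) = of_int (p^1) * of_int (r * v) / of_int s" .
  then show ?thesis using 1(1) by (blast intro: padic_dvdI[rotated])
qed


lemma not_padic_dvd_Suc:
  assumes "\<not> p dvd r" "\<not> p dvd s"
  shows "\<not> padic_dvd p (Suc j) (of_int (p^j) * of_int r / of_int s)"
proof
  assume "padic_dvd p (Suc j) (of_int (p^j) * of_int r / of_int s)"
  moreover have "of_int (p^j) * of_int r / of_int s * of_int (p^0 * s) = (of_int (p^j * r) :: rat)"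
    using assms(2) by auto
  ultimately show False using padic_dvd_decomp_le[OF assms] by fastforce
qed

lemma padic_integral_power_multiple: "\<exists>E. padic_dvd p 0 (of_int (p^E) * q)"
proof (cases "q = 0")
  case True
  then show ?thesis using padic_dvd_zero by simp
next
  case False
  obtain k m r s where decomp: "\<not> p dvd r" "\<not> p dvd s" "q * of_int (p^m * s) = of_int (p^k * r)"
    using rat_prime_power_decomp[OF False] by blast
  moreover have "(of_int s :: rat) \<noteq> 0" using decomp(2) by auto
  ultimately have "of_int (p^m) * q = of_int (p^0) * of_int (p^k * r) / of_int s"
    by (simp add: field_simps)
  then show ?thesis using decomp(2) by (blast intro: padic_dvdI[rotated])
qed

lemma padic_integral_div_p2:
  assumes "padic_dvd p 2 y"
  shows "padic_dvd p 0 (y / of_int p ^ 2)"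
proof -
  have "of_int (p^2) * (y / of_int p ^ 2) = y" using p_pos by simp
  then have "padic_dvd p (0 + 2) (of_int (p^2) * (y / of_int p ^ 2))" using assms by (simp only: add_0)
  then show ?thesis by (rule padic_dvd_cancel_power)
qed

lemma padic_dvd_1_if_div_p: "padic_dvd p 0 (x / of_int p) \<Longrightarrow> padic_dvd p 1 x"
  using padic_dvd_mult_power[of 0 "x / of_int p" 1] p_pos by simp

lemma padic_dvd_1_of_square:
  assumes t: "padic_dvd p 0 t" and t2: "padic_dvd p 1 (t^2)"
  shows "padic_dvd p 1 t"
proof (rule ccontr)
  assume "\<not> padic_dvd p 1 t"
  then have inv: "padic_dvd p 0 (1 / t)" and "t \<noteq> 0"
    using padic_unit_inverse[OF t] padic_dvd_zero by auto
  then have "t^2 * ((1 / t) * (1 / t)) = of_int 1" by (simp add: power2_eq_square)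
  then have "padic_dvd p 1 (of_int 1)" using padic_dvd_mult[OF t2 padic_dvd_mult[OF inv inv]] by simp
  then have "p^1 dvd 1" using padic_dvd_of_int_iff[of 1 1] by simp
  then show False using p_not_dvd_one by simp
qed

text \<open>Newton iteration \<open>x \<mapsto> x - F x * u\<close>, with \<open>u\<close> a fixed inverse of \<open>F'(x0)\<close>.\<close>

lemma hensel_quadratic:
  assumes al: "padic_dvd p 0 al" and be: "padic_dvd p 0 be" and u: "padic_dvd p 0 u"
    and u1: "2 * al * x0 * u = 1" and F0: "padic_dvd p 1 (al * x0^2 + be)"
  shows "\<exists>x. padic_dvd p n (al * x^2 + be)"
proof -
  define F where "F = (\<lambda>x. al * x^2 + be)"
  define xs where "xs = rec_nat x0 (\<lambda>_ x. x - F x * u)"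
  have xs0: "xs 0 = x0" and xsS: "\<And>k. xs (Suc k) = xs k - F (xs k) * u" unfolding xs_def by simp_all
  have inv: "padic_dvd p 1 (xs k - x0) \<and> padic_dvd p (k + 1) (F (xs k))" for k
  proof (induction k)
    case 0 then show ?case using F0 padic_dvd_zero unfolding F_def xs0 by simp
  next
    case (Suc k)
    define x where "x = xs k"
    have IH1: "padic_dvd p 1 (x - x0)" and IH2: "padic_dvd p (k + 1) (F x)" using Suc unfolding x_def by auto
    have F1: "padic_dvd p 1 (F x)" using padic_dvd_mono[OF _ IH2, of 1] by simp
    have "padic_dvd p (1 + 0) (F x * u)" using padic_dvd_mult[OF F1 u] .
    then have A: "padic_dvd p 1 (xs (Suc k) - x0)" unfolding xsS x_def[symmetric]
      using padic_dvd_diff[OF IH1, of "F x * u"] by (simp add: algebra_simps)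
    have eq: "F (xs (Suc k)) = F x * ((2 * al * u) * (x0 - x)) + (al * u * u) * (F x * F x)"
    proof -
      have "F (xs (Suc k)) = F x * (1 - 2 * al * x * u) + (al * u * u) * (F x * F x)"
        unfolding xsS x_def[symmetric] by (simp add: F_def algebra_simps power2_eq_square)
      also have "1 - 2 * al * x * u = (2 * al * u) * (x0 - x)" using u1 by (simp add: algebra_simps)
      finally show ?thesis .
    qed
    have c1: "padic_dvd p 0 (2 * al * u)" using padic_dvd_mult[OF padic_dvd_mult_of_int[OF al, of 2] u] by simp
    have "padic_dvd p 1 (x0 - x)" using padic_dvd_uminus[OF IH1] by simp
    then have "padic_dvd p (0 + 1) ((2 * al * u) * (x0 - x))" using padic_dvd_mult[OF c1] by blast
    then have "padic_dvd p ((k + 1) + (0 + 1)) (F x * ((2 * al * u) * (x0 - x)))" by (rule padic_dvd_mult[OF IH2])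
    then have B1: "padic_dvd p ((k + 1) + 1) (F x * ((2 * al * u) * (x0 - x)))" by (simp only: add_0)
    have c2: "padic_dvd p 0 (al * u * u)" using padic_dvd_mult[OF padic_dvd_mult[OF al u] u] by simp
    have "padic_dvd p ((k + 1) + (k + 1)) (F x * F x)" using padic_dvd_mult[OF IH2 IH2] .
    then have "padic_dvd p (0 + ((k + 1) + (k + 1))) ((al * u * u) * (F x * F x))"
      using padic_dvd_mult[OF c2] by blast
    moreover have le: "(k + 1) + 1 \<le> 0 + ((k + 1) + (k + 1))" by simp
    ultimately have B2: "padic_dvd p ((k + 1) + 1) ((al * u * u) * (F x * F x))" using padic_dvd_mono[OF le] by blast
    have "padic_dvd p (Suc k + 1) (F (xs (Suc k)))" unfolding eq using padic_dvd_add[OF B1 B2] by simp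
    then show ?case using A by simp
  qed
  have "padic_dvd p n (F (xs n))" using inv[of n] padic_dvd_mono[of n "n+1"] by simp
  then show ?thesis unfolding F_def by blast
qed

lemma padic_root_approx_y2_minus_y:
  assumes "\<not> p dvd 2" "padic_dvd p 1 c"
  shows "\<exists>y. padic_dvd p n (y^2 - y + c)"
proof -
  have "padic_dvd p 0 (1 / 2)" using padic_dvdI[of 2 "1 / 2" 0 1] assms(1) by simp
  then have "padic_dvd p (0 + 0) (1 / 2 * (1 / 2))" using padic_dvd_mult by blast
  then have "padic_dvd p 0 (c - 1 / 4)" using padic_dvd_diff[OF padic_dvd_mono[OF _ assms(2)]] by simp
  moreover have "padic_dvd p 1 (1 * (1 / 2)^2 + (c - 1 / 4))"
    using assms(2) by (simp add: power2_eq_square)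
  ultimately obtain x where "padic_dvd p n (1 * x^2 + (c - 1 / 4))"
    using hensel_quadratic[OF padic_dvd_Ints[of 1] _ padic_dvd_Ints[of 1]] by force
  moreover have "1 * x^2 + (c - 1 / 4) = (x + 1 / 2)^2 - (x + 1 / 2) + c"
    by (simp add: power2_eq_square field_simps)
  ultimately show ?thesis by metis
qed

lemma padic_square_class_rep:
  fixes c :: rat
  assumes c0: "c \<noteq> 0"
  shows "\<exists>lam j r s. lam \<noteq> 0 \<and> j \<le> 1 \<and> \<not> p dvd r \<and> \<not> p dvd s \<and>
           c * lam^2 = of_int (p^j) * of_int r / of_int s"
proof -
  obtain k m r s where decomp: "\<not> p dvd r" "\<not> p dvd s" "c * of_int (p^m * s) = of_int (p^k * r)"
    using rat_prime_power_decomp[OF c0] by blast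
  define t where "t = (k + m) div 2"
  define j where "j = (k + m) mod 2"
  have kmt: "k + m = t + t + j" unfolding t_def j_def by presburger
  have j1: "j \<le> 1" unfolding j_def by simp
  have p0: "(of_int p :: rat) \<noteq> 0" using p_pos by simp
  have s0: "(of_int s :: rat) \<noteq> 0" using decomp(2) by auto
  define lam where "lam = (of_int p :: rat) ^ m / of_int p ^ t"
  have lam0: "lam \<noteq> 0" unfolding lam_def using p0 by simp
  have "c * lam^2 * (of_int s * of_int p ^ t * of_int p ^ t) = (c * of_int (p^m * s)) * of_int p ^ m"
    unfolding lam_def using p0 by (simp add: power2_eq_square field_simps)
  also have "\<dots> = of_int p ^ (k + m) * of_int r" unfolding decomp(3) by (simp add: power_add)
  also have "\<dots> = (of_int p ^ j * of_int r / of_int s) * (of_int s * of_int p ^ t * of_int p ^ t)"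
    unfolding kmt using s0 by (simp add: power_add field_simps)
  finally have "c * lam^2 * (of_int s * of_int p ^ t * of_int p ^ t) =
      (of_int p ^ j * of_int r / of_int s) * (of_int s * of_int p ^ t * of_int p ^ t)" .
  moreover have "(of_int s * of_int p ^ t * of_int p ^ t :: rat) \<noteq> 0" using s0 p0 by simp
  ultimately have "c * lam^2 = of_int p ^ j * of_int r / of_int s" using mult_right_cancel by blast
  then show ?thesis using lam0 j1 decomp(1,2) by (intro exI[of _ lam] exI[of _ j] exI[of _ r] exI[of _ s]) simp
qed

end


lemma Ints_if_powers_bounded_denominator:
  fixes q :: rat and M :: int
  assumes M: "M > 0" and powers: "\<And>k. of_int M * q ^ k \<in> \<int>"
  shows "q \<in> \<int>"
proof (rule ccontr)
  assume "q \<notin> \<int>"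
  obtain r s where "quotient_of q = (r, s)" by (cases "quotient_of q")
  then have s: "s > 0" "q = of_int r / of_int s" "coprime r s"
    using quotient_of_denom_pos quotient_of_div quotient_of_coprime by blast+
  with \<open>q \<notin> \<int>\<close> have "s \<ge> 2" by (cases "s = 1") auto
  obtain n where n: "of_int M * q ^ nat M = of_int n" using powers[of "nat M"] by (auto elim: Ints_cases)
  have "(of_int (M * r ^ nat M) :: rat) = of_int (n * s ^ nat M)"
    using n s(1,2) by (simp add: field_simps power_divide)
  then have "s ^ nat M dvd M * r ^ nat M" by (simp only: of_int_eq_iff) simp
  moreover have "coprime (s ^ nat M) (r ^ nat M)" using s(3) by (simp add: coprime_commute)
  ultimately have "s ^ nat M dvd M" using coprime_dvd_mult_left_iff by blast
  moreover have "M < s ^ nat M"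
  proof -
    have "M < 2 ^ nat M"
      using M by (metis of_nat_less_two_power int_nat_eq less_le_trans not_le order.refl zless_nat_eq_int_zless)
    also have "\<dots> \<le> s ^ nat M" using \<open>s \<ge> 2\<close> by (simp add: power_mono)
    finally show ?thesis .
  qed
  ultimately show False using M by (meson zdvd_imp_le not_le)
qed

lemma squares_mod_prime_inj:
  fixes p x y :: int
  assumes "prime p" and x: "0 \<le> x" "x \<le> (p - 1) div 2" and y: "0 \<le> y" "y \<le> (p - 1) div 2"
    and "p dvd x^2 - y^2"
  shows "x = y"
proof (rule ccontr)
  assume "x \<noteq> y"
  then have "x - y \<noteq> 0" "x + y \<noteq> 0" using x y by auto
  have "x^2 - y^2 = (x - y) * (x + y)" by (simp add: algebra_simps power2_eq_square)
  then have "p dvd x - y \<or> p dvd x + y" using assms by (simp add: prime_dvd_mult_iff)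
  then have "\<bar>p\<bar> \<le> \<bar>x - y\<bar> \<or> \<bar>p\<bar> \<le> \<bar>x + y\<bar>"
    using dvd_imp_le_int \<open>x - y \<noteq> 0\<close> \<open>x + y \<noteq> 0\<close> by blast
  moreover have "2 * ((p - 1) div 2) \<le> p - 1" by simp
  ultimately show False using x y by linarith
qed

lemma binary_quadratic_mod_prime_solvable:
  fixes p A B :: int
  assumes p_prime: "prime p" and p2: "p > 2" and A: "\<not> p dvd A"
  shows "\<exists>X Y. p dvd (X^2 - A * Y^2 - B)"
proof -
  define h where "h = (p - 1) div 2"
  define I where "I = {0..h}"
  define f1 where "f1 = (\<lambda>x::int. x^2 mod p)"
  define f2 where "f2 = (\<lambda>y::int. (A * y^2 + B) mod p)"
  have p0: "p > 0" using p_prime prime_gt_0_int by blast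
  have odd: "odd p" using prime_odd_int[OF p_prime p2] .
  have h2: "2 * (h + 1) = p + 1" unfolding h_def using odd by (auto elim!: oddE)
  have inj1: "inj_on f1 I"
  proof (rule inj_onI)
    fix x y assume "x \<in> I" "y \<in> I" "f1 x = f1 y"
    then show "x = y"
      using squares_mod_prime_inj[OF p_prime, of x y] unfolding I_def h_def f1_def by (auto simp: mod_eq_dvd_iff)
  qed
  have inj2: "inj_on f2 I"
  proof (rule inj_onI)
    fix x y assume xy: "x \<in> I" "y \<in> I" "f2 x = f2 y"
    then have "p dvd (A * x^2 + B) - (A * y^2 + B)" unfolding f2_def by (simp add: mod_eq_dvd_iff)
    moreover have "(A * x^2 + B) - (A * y^2 + B) = A * (x^2 - y^2)" by (simp add: algebra_simps)
    ultimately have "p dvd A * (x^2 - y^2)" by simp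
    then have "p dvd x^2 - y^2" using A p_prime by (simp add: prime_dvd_mult_iff)
    then show "x = y" using squares_mod_prime_inj[OF p_prime, of x y] xy(1,2) unfolding I_def h_def by auto
  qed
  have cI: "card I = nat (h + 1)" unfolding I_def by simp
  have c1: "card (f1 ` I) = nat (h + 1)" using card_image[OF inj1] cI by simp
  have c2: "card (f2 ` I) = nat (h + 1)" using card_image[OF inj2] cI by simp
  have sub: "f1 ` I \<union> f2 ` I \<subseteq> {0..<p}" unfolding f1_def f2_def using p0 by auto
  have "card (f1 ` I \<union> f2 ` I) \<le> nat p" using card_mono[OF _ sub] by simp
  moreover have "card (f1 ` I) + card (f2 ` I) = card (f1 ` I \<union> f2 ` I) + card (f1 ` I \<inter> f2 ` I)"
    by (rule card_Un_Int) (auto simp: I_def)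
  moreover have "card (f1 ` I) + card (f2 ` I) = nat p + 1"
  proof -
    have hge: "h \<ge> 0" unfolding h_def using p2 by simp
    have "int (card (f1 ` I) + card (f2 ` I)) = int (nat p + 1)" using c1 c2 h2 hge p0 by simp
    then show ?thesis by (simp only: of_nat_eq_iff)
  qed
  ultimately have "card (f1 ` I \<inter> f2 ` I) > 0" by linarith
  then obtain z where "z \<in> f1 ` I \<inter> f2 ` I" by (metis card.empty ex_in_conv less_irrefl)
  then obtain X Y where "f1 X = f2 Y" by auto
  then have "p dvd X^2 - (A * Y^2 + B)" unfolding f1_def f2_def by (simp add: mod_eq_dvd_iff)
  then show ?thesis by (intro exI[of _ X] exI[of _ Y]) (simp add: algebra_simps)
qed

section \<open>Orders\<close>

fun qpow :: "rat \<Rightarrow> rat \<Rightarrow> quat \<Rightarrow> nat \<Rightarrow> quat" where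
  "qpow a b x 0 = qone"
| "qpow a b x (Suc k) = qmul a b x (qpow a b x k)"

lemma qnorm_qpow: "qnorm a b (qpow a b x k) = qnorm a b x ^ k"
  by (induction k) (simp_all add: qone_def qnorm_qmul)

lemma qnorm_qintegral_bounded_denominator:
  "\<exists>d::int. d > 0 \<and> (\<forall>x. qintegral x \<longrightarrow> of_int d * qnorm a b x \<in> \<int>)"
proof -
  obtain d where d: "d > 0" "\<forall>q\<in>set [a, b, a * b]. of_int d * q \<in> \<int>"
    using common_denominator by blast
  then obtain e1 e2 e3
    where e: "of_int d * a = of_int e1" "of_int d * b = of_int e2" "of_int d * (a * b) = of_int e3"
    by (auto elim!: Ints_cases)
  have "of_int d * qnorm a b x \<in> \<int>" if "qintegral x" for x
  proof -
    obtain n0 n1 n2 n3 where x: "x = Quat (of_int n0) (of_int n1) (of_int n2) (of_int n3)"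
      using \<open>qintegral x\<close> by (cases x) (auto simp: qintegral_Quat elim!: Ints_cases)
    have "of_int d * qnorm a b x = of_int d * (of_int n0)^2 - (of_int d * a) * (of_int n1)^2
        - (of_int d * b) * (of_int n2)^2 + (of_int d * (a * b)) * (of_int n3)^2"
      unfolding x by (simp add: algebra_simps)
    also have "\<dots> = of_int (d * n0^2 - e1 * n1^2 - e2 * n2^2 + e3 * n3^2)" unfolding e by simp
    finally show ?thesis by simp
  qed
  then show ?thesis using d(1) by blast
qed

context
  fixes a b :: rat and R :: "quat set"
  assumes order: "is_order a b R"
begin

lemma order_is_lattice: "is_lattice R"
  using order unfolding is_order_def by blast

lemma order_qone: "qone \<in> R"
  using order unfolding is_order_def by blast

lemma order_qmul: "x \<in> R \<Longrightarrow> y \<in> R \<Longrightarrow> qmul a b x y \<in> R"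
  using order unfolding is_order_def by blast

lemma order_add: "x \<in> R \<Longrightarrow> y \<in> R \<Longrightarrow> x + y \<in> R"
  using lattice_add[OF order_is_lattice] .

lemma order_diff: "x \<in> R \<Longrightarrow> y \<in> R \<Longrightarrow> x - y \<in> R"
  using lattice_diff[OF order_is_lattice] .

lemma order_zero: "0 \<in> R"
  using lattice_zero[OF order_is_lattice] .

lemma order_qsmul: "x \<in> R \<Longrightarrow> qsmul (of_int k) x \<in> R"
  using lattice_qsmul[OF order_is_lattice] .

lemma order_qof_int: "qof_rat (of_int k) \<in> R"
  unfolding qof_rat_eq_qsmul_qone using order_qsmul[OF order_qone] .

lemma order_qpow: "x \<in> R \<Longrightarrow> qpow a b x k \<in> R"
  by (induction k) (simp_all add: order_qone order_qmul)

text \<open>The powers of \<open>x\<close> stay in the lattice \<open>R\<close>, so the denominators of the powers of its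
  norm are bounded.\<close>

lemma order_qnorm_Ints:
  assumes "x \<in> R"
  shows "qnorm a b x \<in> \<int>"
proof -
  obtain D where D: "D > 0" "\<forall>y\<in>R. qintegral (qsmul (of_int D) y)"
    using lattice_bounded_denominator[OF order_is_lattice] by blast
  obtain d where d: "d > 0" "\<forall>y. qintegral y \<longrightarrow> of_int d * qnorm a b y \<in> \<int>"
    using qnorm_qintegral_bounded_denominator by blast
  have "of_int d * qnorm a b (qsmul (of_int D) (qpow a b x k)) \<in> \<int>" for k
    using d(2) D(2) order_qpow[OF assms] by blast
  then have "of_int (d * D^2) * qnorm a b x ^ k \<in> \<int>" for k
    by (simp add: qnorm_qsmul qnorm_qpow mult.assoc)
  moreover have "d * D^2 > 0" using d(1) D(1) by simp
  ultimately show ?thesis using Ints_if_powers_bounded_denominator by blast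
qed

lemma order_qtr_Ints:
  assumes "x \<in> R"
  shows "qtr x \<in> \<int>"
proof -
  have "qnorm a b (x + qof_rat 1) \<in> \<int>"
    using order_add[OF assms order_qof_int[of 1]] by (simp add: order_qnorm_Ints)
  moreover have "qtr x = qnorm a b (x + qof_rat 1) - 1 - qnorm a b x"
    by (simp add: qnorm_add_qof_rat)
  ultimately show ?thesis using order_qnorm_Ints[OF assms] by (simp add: Ints_diff)
qed

lemma order_qconj:
  assumes "x \<in> R"
  shows "qconj x \<in> R"
proof -
  obtain k where "qtr x = of_int k" using order_qtr_Ints[OF assms] by (auto elim: Ints_cases)
  then show ?thesis unfolding qconj_eq using order_diff[OF order_qof_int assms] by simp
qed

end

section \<open>Ramification and the norm form\<close>

context prime_int
begin

lemma primitive_integral_multiple: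
  assumes "w \<noteq> 0"
  shows "\<exists>x0 x1 x2 x3 :: int. \<exists>\<mu>. \<not> (p dvd x0 \<and> p dvd x1 \<and> p dvd x2 \<and> p dvd x3) \<and>
     Quat (of_int x0) (of_int x1) (of_int x2) (of_int x3) = qsmul \<mu> w"
proof -
  obtain w0 w1 w2 w3 where w: "w = Quat w0 w1 w2 w3" by (cases w)
  obtain D where D: "D > 0" "\<forall>q\<in>set [w0, w1, w2, w3]. of_int D * q \<in> \<int>"
    using common_denominator by blast
  then obtain W0 W1 W2 W3 where W: "of_int D * w0 = of_int W0" "of_int D * w1 = of_int W1"
    "of_int D * w2 = of_int W2" "of_int D * w3 = of_int W3"
    by (auto elim!: Ints_cases)
  define g where "g = gcd (gcd (gcd W0 W1) W2) W3"
  have "g dvd W0" "g dvd W1" "g dvd W2" "g dvd W3"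
    unfolding g_def by (meson dvd_trans gcd_dvd1 gcd_dvd2)+
  then obtain X0 X1 X2 X3 where X: "W0 = g * X0" "W1 = g * X1" "W2 = g * X2" "W3 = g * X3"
    by (metis dvdE)
  have "\<not> (W0 = 0 \<and> W1 = 0 \<and> W2 = 0 \<and> W3 = 0)" using W D(1) assms w by (auto simp: zero_quat_eq)
  then have g: "g > 0" unfolding g_def by (simp add: le_less)
  have "\<not> (p dvd X0 \<and> p dvd X1 \<and> p dvd X2 \<and> p dvd X3)"
  proof
    assume "p dvd X0 \<and> p dvd X1 \<and> p dvd X2 \<and> p dvd X3"
    then have "p * g dvd W0" "p * g dvd W1" "p * g dvd W2" "p * g dvd W3"
      unfolding X by (simp_all add: mult.commute)
    then have "p * g dvd g" unfolding g_def by (meson gcd_greatest)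
    then show False using g p_prime prime_gt_1_int[OF p_prime] zdvd_imp_le[of "p * g" g] by simp
  qed
  moreover have "Quat (of_int X0) (of_int X1) (of_int X2) (of_int X3) = qsmul (of_int D / of_int g) w"
    using W g unfolding w X by (simp add: field_simps)
  ultimately show ?thesis by blast
qed

text \<open>Rescaling vectors with a fixed nonzero coordinate to primitive integral ones changes the
  valuation of their norms by a bounded amount.\<close>

lemma not_ram_at_if_norms_approach_zero:
  assumes "m < 4" "C \<noteq> 0"
    and approach: "\<And>n. \<exists>w. qcoord w m = C \<and> padic_dvd p n (qnorm a b w)"
  shows "\<not> ram_at a b p"
proof -
  obtain E where E: "padic_dvd p 0 (of_int (p^E) * (1 / C^2))"
    using padic_integral_power_multiple by blast
  have "\<exists>x0 x1 x2 x3 :: int. \<not> (p dvd x0 \<and> p dvd x1 \<and> p dvd x2 \<and> p dvd x3) \<and>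
            padic_dvd p n (qnorm a b (Quat (of_int x0) (of_int x1) (of_int x2) (of_int x3)))" for n
  proof -
    obtain w where w: "qcoord w m = C" "padic_dvd p (n + E) (qnorm a b w)" using approach by blast
    have "w \<noteq> 0" using w(1) \<open>C \<noteq> 0\<close> by (auto simp: zero_quat_eq split: if_splits)
    then obtain x0 x1 x2 x3 :: int and \<mu> where prim: "\<not> (p dvd x0 \<and> p dvd x1 \<and> p dvd x2 \<and> p dvd x3)"
      and x: "Quat (of_int x0) (of_int x1) (of_int x2) (of_int x3) = qsmul \<mu> w"
      using primitive_integral_multiple by blast
    obtain K where K: "\<mu> * C = of_int K"
      using arg_cong[OF x, of "\<lambda>y. qcoord y m"] w(1) \<open>m < 4\<close>
      by (cases w) (auto dest!: less_4_cases; metis)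
    have "of_int (p^E) * qnorm a b (Quat (of_int x0) (of_int x1) (of_int x2) (of_int x3))
        = of_int (K^2) * ((of_int (p^E) * (1 / C^2)) * qnorm a b w)"
      unfolding x qnorm_qsmul using \<open>C \<noteq> 0\<close> K[symmetric] by (simp add: field_simps power2_eq_square)
    moreover have "padic_dvd p (n + E) (of_int (K^2) * ((of_int (p^E) * (1 / C^2)) * qnorm a b w))"
      using padic_dvd_mult_of_int[OF padic_dvd_mult[OF E w(2)], of "K^2"] by (simp only: add_0)
    ultimately show ?thesis using prim padic_dvd_cancel_power by metis
  qed
  then show ?thesis unfolding ram_at_def by blast
qed

lemma not_ram_at_if_binary_form_approaches_zero:
  assumes "lb \<noteq> 0" and approach: "\<And>n. \<exists>x y. padic_dvd p n (x^2 - a * la^2 * y^2 - b * lb^2)"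
  shows "\<not> ram_at a b p"
proof (rule not_ram_at_if_norms_approach_zero)
  fix n
  obtain x y where "padic_dvd p n (x^2 - a * la^2 * y^2 - b * lb^2)" using approach by blast
  then show "\<exists>w. qcoord w 2 = lb \<and> padic_dvd p n (qnorm a b w)"
    by (intro exI[of _ "Quat x (y * la) lb 0"]) (simp add: power_mult_distrib algebra_simps)
qed (use assms in auto)

text \<open>Lift a solution modulo \<open>p\<close> of \<open>x\<^sup>2 - a' y\<^sup>2 = b'\<close> (\<open>a'\<close>, \<open>b'\<close> units) in whichever variable
  has a unit partial derivative.\<close>

lemma binary_form_approaches_zero:
  assumes a': "padic_dvd p 0 a'" "\<not> padic_dvd p 1 a'" and b': "padic_dvd p 0 b'"
    and p2: "\<not> p dvd 2"
    and sol: "padic_dvd p 1 (of_int X^2 - a' * of_int Y^2 - b')" and prim: "\<not> (p dvd X \<and> p dvd Y)"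
  shows "\<exists>x y. padic_dvd p n (x^2 - a' * y^2 - b')"
proof (cases "p dvd X")
  case False
  have "padic_dvd p 0 (1 / of_int (2 * X))"
    using padic_dvdI[of "2 * X" _ 0 1] prime_not_dvd_mult[OF p2 False] by simp
  moreover have "padic_dvd p 0 (- (a' * of_int Y^2) - b')"
  proof -
    have "padic_dvd p 0 (of_int Y^2)" by (rule padic_dvd_Ints) simp
    then have "padic_dvd p 0 (a' * of_int Y^2)" using padic_dvd_mult[OF a'(1)] by fastforce
    then show ?thesis using padic_dvd_diff[OF padic_dvd_uminus b'] by blast
  qed
  moreover have "2 * 1 * of_int X * (1 / of_int (2 * X)) = (1::rat)" using False by auto
  ultimately obtain x where "padic_dvd p n (1 * x^2 + (- (a' * of_int Y^2) - b'))"
    using hensel_quadratic[OF padic_dvd_Ints[of 1]] sol by (fastforce simp: algebra_simps)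
  then show ?thesis by (intro exI[of _ x] exI[of _ "of_int Y"]) (simp add: algebra_simps)
next
  case True
  then have "\<not> p dvd Y" using prim by blast
  have "a' \<noteq> 0" using a'(2) padic_dvd_zero by auto
  have "padic_dvd p 0 (1 / of_int (2 * Y))"
    using padic_dvdI[of "2 * Y" _ 0 1] prime_not_dvd_mult[OF p2 \<open>\<not> p dvd Y\<close>] by simp
  then have "padic_dvd p 0 (- (1 / a') * (1 / of_int (2 * Y)))"
    using padic_dvd_mult[OF padic_dvd_uminus[OF padic_unit_inverse[OF a']]] by fastforce
  moreover have "padic_dvd p 0 (of_int X^2)" by (rule padic_dvd_Ints) simp
  then have "padic_dvd p 0 (of_int X^2 - b')" using padic_dvd_diff b' by blast
  moreover have "2 * (- a') * of_int Y * (- (1 / a') * (1 / of_int (2 * Y))) = 1"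
    using \<open>a' \<noteq> 0\<close> \<open>\<not> p dvd Y\<close> by auto
  ultimately obtain y where "padic_dvd p n (- a' * y^2 + (of_int X^2 - b'))"
    using hensel_quadratic[OF padic_dvd_uminus[OF a'(1)]] sol by (fastforce simp: algebra_simps)
  then show ?thesis by (intro exI[of _ "of_int X"] exI[of _ y]) (simp add: algebra_simps)
qed

end

locale ramified_at_p = prime_int +
  fixes a b :: rat
  assumes p_gt_2: "p > 2" and ramified: "ramified_exactly_at a b p"
begin

lemma ram_at_p: "ram_at a b p"
  using ramified p_prime unfolding ramified_exactly_at_def by blast

lemma a_nonzero: "a \<noteq> 0" and b_nonzero: "b \<noteq> 0"
  using ramified unfolding ramified_exactly_at_def by auto

lemma p_not_dvd_2: "\<not> p dvd 2"
  using p_gt_2 zdvd_imp_le[of p 2] by auto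

text \<open>If \<open>tr z\<close> were not \<open>p\<close>-integral, then \<open>z/tr z\<close> would satisfy \<open>y\<^sup>2 - y + c\<close> with
  \<open>c = N z / (tr z)\<^sup>2\<close> divisible by \<open>p\<close>; by Hensel this has a \<open>p\<close>-adic root \<open>y\<close>, and then
  \<open>z/tr z - y\<close> would be an isotropic vector of the norm form over \<open>\<rat>\<^sub>p\<close>.\<close>

lemma padic_integral_qtr:
  assumes N: "padic_dvd p 0 (qnorm a b z)"
  shows "padic_dvd p 0 (qtr z)"
proof (rule ccontr)
  assume nonint: "\<not> padic_dvd p 0 (qtr z)"
  define t where "t = qtr z"
  have "t \<noteq> 0" using nonint padic_dvd_zero unfolding t_def by auto
  have inv_t: "padic_dvd p 1 (1 / t)"
    using padic_dvd_or_inverse[OF \<open>t \<noteq> 0\<close>, of 0] nonint unfolding t_def by simp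
  have "\<exists>m. 0 < m \<and> m < 4 \<and> qcoord z m \<noteq> 0"
  proof (rule ccontr)
    assume "\<not> ?thesis"
    moreover obtain z0 z1 z2 z3 where z: "z = Quat z0 z1 z2 z3" by (cases z)
    ultimately have "z1 = 0" "z2 = 0" "z3 = 0"
      by (auto dest: spec[of _ 1] spec[of _ 2] spec[of _ 3])
    then have "padic_dvd p 0 z0" using N padic_integral_of_square unfolding z by simp
    then show False using nonint padic_dvd_mult_of_int[of 0 z0 2] unfolding z by simp
  qed
  then obtain m where m: "0 < m" "m < 4" "qcoord z m \<noteq> 0" by blast
  define c where "c = qnorm a b z / t^2"
  have "padic_dvd p (0 + (1 + 1)) (qnorm a b z * ((1 / t) * (1 / t)))"
    using padic_dvd_mult[OF N padic_dvd_mult[OF inv_t inv_t]] .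
  moreover have "qnorm a b z * ((1 / t) * (1 / t)) = c" unfolding c_def by (simp add: power2_eq_square)
  ultimately have "padic_dvd p 1 c" using padic_dvd_mono[of 1 "0 + (1 + 1)"] by simp
  then have root: "\<exists>y. padic_dvd p n (y^2 - y + c)" for n
    using padic_root_approx_y2_minus_y[OF p_not_dvd_2] by blast
  have approach: "\<exists>w. qcoord w m = qcoord z m / t \<and> padic_dvd p n (qnorm a b w)" for n
  proof -
    obtain y where y: "padic_dvd p n (y^2 - y + c)" using root by blast
    define w where "w = qsmul (1 / t) z - qof_rat y"
    have "qnorm a b w = y^2 - y + c"
      unfolding w_def qnorm_diff_qof_rat qtr_qsmul qnorm_qsmul c_def t_def[symmetric]
      using \<open>t \<noteq> 0\<close> by (simp add: field_simps power2_eq_square)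
    moreover have "qcoord w m = qcoord z m / t"
      unfolding w_def using m by (cases z) (auto simp: qof_rat_def dest!: less_4_cases)
    ultimately show ?thesis using y by auto
  qed
  have "qcoord z m / t \<noteq> 0" using m(3) \<open>t \<noteq> 0\<close> by simp
  from not_ram_at_if_norms_approach_zero[OF m(2) this approach] show False using ram_at_p by simp
qed

definition padic_integral :: "quat \<Rightarrow> bool" where
  "padic_integral z \<longleftrightarrow> padic_dvd p 0 (qnorm a b z)"

lemma padic_integral_qmul:
  "padic_integral z \<Longrightarrow> padic_integral w \<Longrightarrow> padic_integral (qmul a b z w)"
  unfolding padic_integral_def qnorm_qmul using padic_dvd_mult by fastforce

lemma padic_integral_add:
  assumes "padic_integral z" "padic_integral w"
  shows "padic_integral (z + w)"
proof -
  have "padic_integral (qmul a b z (qconj w))"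
    using assms padic_integral_qmul by (simp add: padic_integral_def qnorm_qconj)
  then have "padic_dvd p 0 (qtr (qmul a b z (qconj w)))"
    unfolding padic_integral_def by (rule padic_integral_qtr)
  then show ?thesis using assms unfolding padic_integral_def qnorm_add by (intro padic_dvd_add)
qed

lemma padic_integral_qsmul: "padic_integral z \<Longrightarrow> padic_integral (qsmul (of_int k) z)"
  unfolding padic_integral_def qnorm_qsmul using padic_dvd_mult_of_int[of 0 _ "k^2"] by simp

lemma qtr_padic_dvd_1_if_qnorm_padic_dvd_2:
  assumes "padic_dvd p 2 (qnorm a b z)"
  shows "padic_dvd p 1 (qtr z)"
proof -
  have "qnorm a b (qsmul (1 / of_int p) z) = qnorm a b z / of_int p ^ 2"
    by (simp add: qnorm_qsmul power_divide)
  then have "padic_dvd p 0 (qtr (qsmul (1 / of_int p) z))"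
    using padic_integral_qtr padic_integral_div_p2[OF assms] by simp
  then show ?thesis unfolding qtr_qsmul by (intro padic_dvd_1_if_div_p) simp
qed

lemma qnorm_padic_dvd_1_add:
  assumes "padic_dvd p 1 (qnorm a b u)" "padic_dvd p 1 (qnorm a b w)"
  shows "padic_dvd p 1 (qnorm a b (u + w))"
proof -
  have "padic_dvd p (1 + 1) (qnorm a b (qmul a b u (qconj w)))"
    unfolding qnorm_qmul qnorm_qconj using padic_dvd_mult[OF assms] .
  then have "padic_dvd p 1 (qtr (qmul a b u (qconj w)))"
    using qtr_padic_dvd_1_if_qnorm_padic_dvd_2 by (simp only: one_add_one)
  then show ?thesis unfolding qnorm_add using assms by (intro padic_dvd_add) auto
qed

lemma qtr_padic_dvd_1_if_qnorm_padic_dvd_1: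
  assumes "padic_dvd p 1 (qnorm a b u)"
  shows "padic_dvd p 1 (qtr u)"
proof -
  have "padic_dvd p (1 + 1) (qnorm a b (qmul a b u u))"
    unfolding qnorm_qmul using padic_dvd_mult[OF assms assms] .
  then have "padic_dvd p 1 (qtr (qmul a b u u))"
    using qtr_padic_dvd_1_if_qnorm_padic_dvd_2 by (simp only: one_add_one)
  moreover have "qtr (qmul a b u u) = (qtr u)^2 - of_int 2 * qnorm a b u"
    unfolding qmul_self qtr_diff qtr_qsmul qtr_qof_rat by (simp add: power2_eq_square)
  ultimately have "padic_dvd p 1 ((qtr u)^2)"
    using padic_dvd_add[OF _ padic_dvd_mult_of_int[OF assms, of 2]] by fastforce
  moreover have "padic_dvd p 0 (qnorm a b u)" using padic_dvd_mono[OF _ assms] by simp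
  ultimately show ?thesis using padic_dvd_1_of_square padic_integral_qtr by blast
qed

lemma not_ram_at_if_unit_square_classes:
  assumes "lb \<noteq> 0"
    and a': "padic_dvd p 0 (a * la^2)" "\<not> padic_dvd p 1 (a * la^2)"
    and b': "padic_dvd p 0 (b * lb^2)" "\<not> padic_dvd p 1 (b * lb^2)"
  shows "\<not> ram_at a b p"
proof -
  have approx: "\<exists>A. padic_dvd p 1 (c - of_int A) \<and> \<not> p dvd A"
    if c: "padic_dvd p 0 c" "\<not> padic_dvd p 1 c" for c
  proof -
    obtain A where A: "padic_dvd p 1 (c - of_int A)"
      using padic_integral_approx_int[OF c(1)] by blast
    moreover have "\<not> p dvd A"
    proof
      assume "p dvd A"
      then have "padic_dvd p 1 (c - of_int A + of_int A)"
        using padic_dvd_add[OF A padic_dvd_of_int[of 1 A]] by simp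
      then show False using c(2) by simp
    qed
    ultimately show ?thesis by blast
  qed
  obtain A where A: "padic_dvd p 1 (a * la^2 - of_int A)" "\<not> p dvd A" using approx[OF a'] by blast
  obtain B where B: "padic_dvd p 1 (b * lb^2 - of_int B)" "\<not> p dvd B" using approx[OF b'] by blast
  obtain X Y where XY: "p dvd X^2 - A * Y^2 - B"
    using binary_quadratic_mod_prime_solvable[OF p_prime p_gt_2 A(2)] by blast
  have "\<not> (p dvd X \<and> p dvd Y)"
  proof
    assume "p dvd X \<and> p dvd Y"
    then have "p dvd X^2 - A * Y^2" by (simp add: power2_eq_square)
    from dvd_diff[OF this XY] show False using B(2) by simp
  qed
  moreover have "padic_dvd p 1 (of_int (X^2 - A * Y^2 - B))"
    using padic_dvd_of_int[of 1 "X^2 - A * Y^2 - B"] XY by (simp only: power_one_right)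
  then have "padic_dvd p 1 (of_int (X^2 - A * Y^2 - B) - of_int (Y^2) * (a * la^2 - of_int A)
      - (b * lb^2 - of_int B))"
    using padic_dvd_diff[OF padic_dvd_diff[OF _ padic_dvd_mult_of_int[OF A(1)]] B(1)] by blast
  moreover have "of_int (X^2 - A * Y^2 - B) - of_int (Y^2) * (a * la^2 - of_int A) - (b * lb^2 - of_int B)
      = of_int X^2 - a * la^2 * of_int Y^2 - b * lb^2"
    by (simp add: algebra_simps)
  ultimately show ?thesis
    using not_ram_at_if_binary_form_approaches_zero[OF \<open>lb \<noteq> 0\<close>]
      binary_form_approaches_zero[OF a' b'(1) p_not_dvd_2] by metis
qed

lemma exists_qnorm_valuation_one:
  "\<exists>x. padic_dvd p 1 (qnorm a b x) \<and> \<not> padic_dvd p 2 (qnorm a b x)"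
proof -
  obtain la ja ra sa where A: "la \<noteq> 0" "ja \<le> 1" "\<not> p dvd ra" "\<not> p dvd sa"
    "a * la^2 = of_int (p^ja) * of_int ra / of_int sa"
    using padic_square_class_rep[OF a_nonzero] by blast
  obtain lb jb rb sb where B: "lb \<noteq> 0" "jb \<le> 1" "\<not> p dvd rb" "\<not> p dvd sb"
    "b * lb^2 = of_int (p^jb) * of_int rb / of_int sb"
    using padic_square_class_rep[OF b_nonzero] by blast
  have valuation_one: "padic_dvd p 1 (- (c * l^2)) \<and> \<not> padic_dvd p 2 (- (c * l^2))"
    if "c * l^2 = of_int (p^1) * of_int r / of_int s" "\<not> p dvd r" "\<not> p dvd s" for c l r s
  proof -
    have e: "- (c * l^2) = of_int (p^1) * of_int (- r) / of_int s" using that(1) by simp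
    show ?thesis
      unfolding e using padic_dvdI[OF that(3) refl, of 1 "- r"]
        not_padic_dvd_Suc[of "- r" s 1, unfolded Suc_1] that(2,3)
      by (metis dvd_minus_iff)
  qed
  consider "ja = 1" | "jb = 1" | "ja = 0" "jb = 0" using A(2) B(2) by linarith
  then show ?thesis
  proof cases
    case 1
    then show ?thesis using valuation_one[of a la ra sa] A by (intro exI[of _ "Quat 0 la 0 0"]) simp
  next
    case 2
    then show ?thesis using valuation_one[of b lb rb sb] B by (intro exI[of _ "Quat 0 0 lb 0"]) simp
  next
    case 3
    have "padic_dvd p 0 (a * la^2)" "padic_dvd p 0 (b * lb^2)"
      using 3 A(4,5) B(4,5) by (auto intro: padic_dvdI)
    moreover have "\<not> padic_dvd p 1 (a * la^2)" "\<not> padic_dvd p 1 (b * lb^2)"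
      using 3 A(3-5) B(3-5) not_padic_dvd_Suc[of _ _ 0] by auto
    ultimately have "\<not> ram_at a b p" using not_ram_at_if_unit_square_classes[OF B(1)] by blast
    then show ?thesis using ram_at_p by simp
  qed
qed

end

section \<open>Sublattices of prime index\<close>

lemma (in prime_int) lattice_mem_if_coprime_multiples:
  assumes L: "is_lattice L"
    and mult: "qsmul (of_int s) x \<in> L" "qsmul (of_int (p^k)) x \<in> L" and "\<not> p dvd s"
  shows "x \<in> L"
proof -
  have "coprime s (p^k)" using \<open>\<not> p dvd s\<close> p_prime by (simp add: prime_imp_coprime coprime_commute)
  then obtain u v where uv: "u * s + v * p^k = 1" using bezout_int[of s "p^k"] by auto
  have "x = qsmul (of_int (u * s + v * p^k)) x" unfolding uv by (simp add: qsmul_one)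
  also have "\<dots> = qsmul (of_int u) (qsmul (of_int s) x) + qsmul (of_int v) (qsmul (of_int (p^k)) x)"
    by (simp only: qsmul_add_left qsmul_qsmul of_int_add of_int_mult)
  also have "\<dots> \<in> L" using lattice_add[OF L lattice_qsmul[OF L mult(1)] lattice_qsmul[OF L mult(2)]] .
  finally show ?thesis .
qed

definition coset :: "quat set \<Rightarrow> quat \<Rightarrow> quat set" where
  "coset L x = (\<lambda>y. x + y) ` L"

lemma lattice_index_eq_card: "lattice_index M L = card (coset L ` M)"
  unfolding lattice_index_def coset_def qadd_eq_plus ..

lemma sum_const_qsmul: "finite A \<Longrightarrow> (\<Sum>c\<in>A. x) = qsmul (of_nat (card A)) x"
  by (induction A rule: finite_induct) (simp_all add: qsmul_zero_left qsmul_add_left qsmul_one add.commute)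

lemma coset_eq_iff:
  assumes L: "is_lattice L"
  shows "coset L x = coset L y \<longleftrightarrow> x - y \<in> L"
proof
  assume "coset L x = coset L y"
  moreover have "x \<in> coset L x" unfolding coset_def using lattice_zero[OF L] by force
  ultimately obtain l where "l \<in> L" "x = y + l" unfolding coset_def by auto
  then show "x - y \<in> L" by simp
next
  have sub: "coset L x \<subseteq> coset L y" if "x - y \<in> L" for x y
  proof
    fix z assume "z \<in> coset L x"
    then obtain l where "l \<in> L" "z = y + ((x - y) + l)" unfolding coset_def by auto
    then show "z \<in> coset L y" unfolding coset_def using lattice_add[OF L that] by blast
  qed
  assume "x - y \<in> L"
  moreover have "y - x \<in> L" using lattice_uminus[OF L \<open>x - y \<in> L\<close>] by simp
  ultimately show "coset L x = coset L y" using sub by blast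
qed

text \<open>Adding \<open>x\<close> permutes the finitely many cosets of \<open>L\<close> in \<open>M\<close>; summing over a set of
  representatives, everything but \<open>[M : L] \<cdot> x\<close> cancels modulo \<open>L\<close>.\<close>

lemma index_qsmul_mem:
  assumes L: "is_lattice L" and add: "\<And>x y. x \<in> M \<Longrightarrow> y \<in> M \<Longrightarrow> x + y \<in> M"
    and fin: "finite (coset L ` M)" and x: "x \<in> M"
  shows "qsmul (of_nat (card (coset L ` M))) x \<in> L"
proof -
  define C where "C = coset L ` M"
  have fin_C: "finite C" using fin unfolding C_def .
  define r where "r c = (SOME y. y \<in> M \<and> c = coset L y)" for c
  have r: "r c \<in> M \<and> c = coset L (r c)" if "c \<in> C" for c
  proof -
    have "\<exists>y. y \<in> M \<and> c = coset L y" using that unfolding C_def by blast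
    then show ?thesis unfolding r_def by (rule someI_ex)
  qed
  define \<sigma> where "\<sigma> c = coset L (x + r c)" for c
  have into: "\<sigma> ` C \<subseteq> C" unfolding \<sigma>_def C_def using r add[OF x] C_def by blast
  have inj: "inj_on \<sigma> C"
  proof (rule inj_onI)
    fix c1 c2 assume c: "c1 \<in> C" "c2 \<in> C" "\<sigma> c1 = \<sigma> c2"
    from c(3) have "(x + r c1) - (x + r c2) \<in> L" unfolding \<sigma>_def coset_eq_iff[OF L] .
    then have "coset L (r c1) = coset L (r c2)" unfolding coset_eq_iff[OF L] by simp
    then show "c1 = c2" using r[OF c(1)] r[OF c(2)] by simp
  qed
  have bij: "bij_betw \<sigma> C C" using endo_inj_surj[OF fin_C into inj] inj by (simp add: bij_betw_def)
  have mem: "x + r c - r (\<sigma> c) \<in> L" if "c \<in> C" for c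
  proof -
    have "\<sigma> c \<in> C" using into that by blast
    then have "\<sigma> c = coset L (r (\<sigma> c))" by (rule conjunct2[OF r])
    then show ?thesis unfolding \<sigma>_def coset_eq_iff[OF L] .
  qed
  have "(\<Sum>c\<in>C. x + r c - r (\<sigma> c)) \<in> L" using lattice_sum[OF L fin_C mem] .
  moreover have "(\<Sum>c\<in>C. x + r c - r (\<sigma> c)) = (\<Sum>c\<in>C. x) + (\<Sum>c\<in>C. r c) - (\<Sum>c\<in>C. r (\<sigma> c))"
    by (simp add: sum.distrib sum_subtractf)
  moreover have "(\<Sum>c\<in>C. r (\<sigma> c)) = (\<Sum>c\<in>C. r c)" using sum.reindex_bij_betw[OF bij] .
  moreover have "(\<Sum>c\<in>C. x) = qsmul (of_nat (card C)) x" using sum_const_qsmul[OF fin_C] .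
  ultimately show ?thesis unfolding C_def by simp
qed

lemma (in prime_int) index_prime_cyclic:
  assumes L: "is_lattice L" and smul: "\<And>x k. x \<in> M \<Longrightarrow> qsmul (of_int k) x \<in> M"
    and card: "card (coset L ` M) = nat p"
    and q: "q \<in> M" "q \<notin> L" "qsmul (of_int p) q \<in> L"
    and x: "x \<in> M"
  shows "\<exists>k::int. x - qsmul (of_int k) q \<in> L"
proof -
  have fin: "finite (coset L ` M)" using card p_pos by (intro card_ge_0_finite) simp
  define f where "f k = coset L (qsmul (of_int k) q)" for k :: int
  have "inj_on f {0..<p}"
  proof (rule inj_onI)
    fix i j assume ij: "i \<in> {0..<p}" "j \<in> {0..<p}" "f i = f j"
    then have "qsmul (of_int (i - j)) q \<in> L"
      unfolding f_def coset_eq_iff[OF L] by (simp add: qsmul_diff_left)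
    moreover have "qsmul (of_int (p^1)) q \<in> L" using q(3) by simp
    ultimately have "p dvd i - j"
      using lattice_mem_if_coprime_multiples[OF L] q(2) by blast
    show "i = j"
    proof (rule ccontr)
      assume "i \<noteq> j"
      then have "\<bar>p\<bar> \<le> \<bar>i - j\<bar>" using dvd_imp_le_int \<open>p dvd i - j\<close> by simp
      then show False using ij(1,2) by auto
    qed
  qed
  then have "card (f ` {0..<p}) = card (coset L ` M)" using card by (simp add: card_image)
  moreover have "f ` {0..<p} \<subseteq> coset L ` M" unfolding f_def using smul[OF q(1)] by blast
  ultimately have eq: "f ` {0..<p} = coset L ` M" using card_subset_eq[OF fin] by blast
  have "coset L x \<in> coset L ` M" using x by blast
  then obtain k where "coset L x = f k" unfolding eq[symmetric] by blast
  then show ?thesis unfolding f_def coset_eq_iff[OF L] by blast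
qed

section \<open>The maximal order\<close>

context ramified_at_p
begin

lemma padic_integral_scaled_qintegral:
  "\<exists>n. \<forall>z. padic_integral z \<longrightarrow> (\<exists>s. \<not> p dvd s \<and> qintegral (qsmul (of_int (s * p^n)) z))"
proof -
  obtain n where n: "\<And>x0 x1 x2 x3. \<not> (p dvd x0 \<and> p dvd x1 \<and> p dvd x2 \<and> p dvd x3) \<Longrightarrow>
      \<not> padic_dvd p n (qnorm a b (Quat (of_int x0) (of_int x1) (of_int x2) (of_int x3)))"
    using ram_at_p unfolding ram_at_def by blast
  have "\<exists>s. \<not> p dvd s \<and> qintegral (qsmul (of_int (s * p^n)) z)" if z: "padic_integral z" for z
  proof (cases "z = 0")
    case True
    then show ?thesis using p_not_dvd_one by (intro exI[of _ 1]) (simp add: qsmul_zero zero_quat_eq qintegral_Quat)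
  next
    case False
    then obtain x0 x1 x2 x3 :: int and \<mu> where prim: "\<not> (p dvd x0 \<and> p dvd x1 \<and> p dvd x2 \<and> p dvd x3)"
      and x: "Quat (of_int x0) (of_int x1) (of_int x2) (of_int x3) = qsmul \<mu> z"
      using primitive_integral_multiple by blast
    have "\<mu> \<noteq> 0" using prim x by (cases z) auto
    have "\<not> padic_dvd p n \<mu>"
    proof
      assume "padic_dvd p n \<mu>"
      then have "padic_dvd p (n + n + 0) (\<mu> * \<mu> * qnorm a b z)"
        using padic_dvd_mult[OF padic_dvd_mult] z unfolding padic_integral_def by blast
      then have "padic_dvd p n (qnorm a b (qsmul \<mu> z))"
        using padic_dvd_mono[of n "n + n + 0"] by (simp add: qnorm_qsmul power2_eq_square)
      then show False using n[OF prim] x by simp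
    qed
    then have "padic_dvd p 1 (of_int (p^n) / \<mu>)" using padic_dvd_or_inverse[OF \<open>\<mu> \<noteq> 0\<close>] by blast
    then obtain r s where rs: "\<not> p dvd s" "of_int (p^n) / \<mu> = of_int (p^1) * of_int r / of_int s"
      by (rule padic_dvdE)
    then have "of_int s * (of_int (p^n) / \<mu>) = of_int (p * r)" by auto
    then have "qsmul (of_int (s * p^n)) z = qsmul (of_int (p * r)) (qsmul \<mu> z)"
      using \<open>\<mu> \<noteq> 0\<close> by (simp add: qsmul_qsmul field_simps)
    then have "qintegral (qsmul (of_int (s * p^n)) z)"
      unfolding x[symmetric] by (simp add: qintegral_Quat)
    then show ?thesis using rs(1) by blast
  qed
  then show ?thesis by blast
qed

end

locale maximal_order_at_p = ramified_at_p +
  fixes Om :: "quat set"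
  assumes maximal: "is_maximal_order a b Om"
begin

lemma order_Om: "is_order a b Om"
  using maximal unfolding is_maximal_order_def by blast

lemma order_eq_Om_if_superset: "is_order a b R \<Longrightarrow> Om \<subseteq> R \<Longrightarrow> R = Om"
  using maximal unfolding is_maximal_order_def by blast

lemma padic_integral_if_mem_Om: "x \<in> Om \<Longrightarrow> padic_integral x"
  unfolding padic_integral_def using order_qnorm_Ints[OF order_Om] padic_dvd_Ints by blast

lemma mem_Om_if_coprime_multiples:
  "qsmul (of_int s) y \<in> Om \<Longrightarrow> qsmul (of_int (p^k)) y \<in> Om \<Longrightarrow> \<not> p dvd s \<Longrightarrow> y \<in> Om"
  using lattice_mem_if_coprime_multiples[OF order_is_lattice[OF order_Om]] by blast

lemma Om_denominator_bound:
  "\<exists>c. \<forall>z. padic_integral z \<longrightarrow> (\<exists>s. \<not> p dvd s \<and> qsmul (of_int (s * p^c)) z \<in> Om)"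
proof -
  obtain n where n: "\<And>z. padic_integral z \<Longrightarrow> \<exists>s. \<not> p dvd s \<and> qintegral (qsmul (of_int (s * p^n)) z)"
    using padic_integral_scaled_qintegral by blast
  obtain D where D: "D > 0" "\<And>x. qintegral x \<Longrightarrow> qsmul (of_int D) x \<in> Om"
    using lattice_contains_scaled_qintegral[OF order_is_lattice[OF order_Om]] by blast
  obtain d D' where D': "D = p^d * D'" "\<not> p dvd D'" using int_prime_power_decomp[of D] D(1) by auto
  have "\<exists>s. \<not> p dvd s \<and> qsmul (of_int (s * p^(n + d))) z \<in> Om" if z: "padic_integral z" for z
  proof -
    obtain s where s: "\<not> p dvd s" "qintegral (qsmul (of_int (s * p^n)) z)" using n[OF z] by blast
    have "qsmul (of_int D) (qsmul (of_int (s * p^n)) z) = qsmul (of_int ((D' * s) * p^(n + d))) z"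
      unfolding D'(1) by (simp add: qsmul_qsmul power_add algebra_simps)
    then show ?thesis using D(2)[OF s(2)] prime_not_dvd_mult[OF D'(2) s(1)] by metis
  qed
  then show ?thesis by blast
qed

text \<open>Maximality of
  \<open>Om\<close> forces \<open>Om_sat = Om\<close>: if \<open>p\<^bsup>e+1\<^esup> Om_sat \<subseteq> Om\<close> then \<open>Om_ext e = Om + p\<^sup>e Om_sat\<close> is
  an order containing \<open>Om\<close>, hence equal to it.\<close>

definition Om_sat :: "quat set" where
  "Om_sat = {z. padic_integral z \<and> (\<exists>k. qsmul (of_int (p^k)) z \<in> Om)}"

lemma Om_subset_Om_sat: "Om \<subseteq> Om_sat"
  unfolding Om_sat_def using padic_integral_if_mem_Om by (auto intro!: exI[of _ 0] simp: qsmul_one)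

lemma Om_sat_add:
  assumes "x \<in> Om_sat" "y \<in> Om_sat"
  shows "x + y \<in> Om_sat"
proof -
  obtain k l where kl: "qsmul (of_int (p^k)) x \<in> Om" "qsmul (of_int (p^l)) y \<in> Om"
    using assms unfolding Om_sat_def by blast
  have "qsmul (of_int (p^(k + l))) (x + y) =
      qsmul (of_int (p^l)) (qsmul (of_int (p^k)) x) + qsmul (of_int (p^k)) (qsmul (of_int (p^l)) y)"
    by (simp add: qsmul_add qsmul_qsmul power_add mult.commute)
  also have "\<dots> \<in> Om"
    using order_add[OF order_Om order_qsmul[OF order_Om kl(1)] order_qsmul[OF order_Om kl(2)]] .
  finally show ?thesis using assms padic_integral_add unfolding Om_sat_def by blast
qed

lemma Om_sat_qsmul:
  assumes "x \<in> Om_sat"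
  shows "qsmul (of_int k) x \<in> Om_sat"
proof -
  obtain l where "qsmul (of_int (p^l)) x \<in> Om" using assms unfolding Om_sat_def by blast
  moreover have "qsmul (of_int (p^l)) (qsmul (of_int k) x) = qsmul (of_int k) (qsmul (of_int (p^l)) x)"
    by (simp add: qsmul_qsmul mult.commute)
  ultimately have "qsmul (of_int (p^l)) (qsmul (of_int k) x) \<in> Om"
    using order_qsmul[OF order_Om] by simp
  then show ?thesis using assms padic_integral_qsmul unfolding Om_sat_def by blast
qed

lemma Om_sat_qmul:
  assumes "x \<in> Om_sat" "y \<in> Om_sat"
  shows "qmul a b x y \<in> Om_sat"
proof -
  obtain k l where kl: "qsmul (of_int (p^k)) x \<in> Om" "qsmul (of_int (p^l)) y \<in> Om"
    using assms unfolding Om_sat_def by blast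
  have "qsmul (of_int (p^(k + l))) (qmul a b x y) = qmul a b (qsmul (of_int (p^k)) x) (qsmul (of_int (p^l)) y)"
    by (simp add: qmul_qsmul_left qmul_qsmul_right qsmul_qsmul power_add mult.commute)
  also have "\<dots> \<in> Om" using kl by (rule order_qmul[OF order_Om])
  finally show ?thesis using assms padic_integral_qmul unfolding Om_sat_def by blast
qed

lemma Om_sat_bounded: "\<exists>c. \<forall>y\<in>Om_sat. qsmul (of_int (p^c)) y \<in> Om"
proof -
  obtain c where c: "\<And>z. padic_integral z \<Longrightarrow> \<exists>s. \<not> p dvd s \<and> qsmul (of_int (s * p^c)) z \<in> Om"
    using Om_denominator_bound by blast
  have "qsmul (of_int (p^c)) y \<in> Om" if y: "y \<in> Om_sat" for y
  proof -
    obtain k where k: "qsmul (of_int (p^k)) y \<in> Om" using y unfolding Om_sat_def by blast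
    obtain s where s: "\<not> p dvd s" "qsmul (of_int (s * p^c)) y \<in> Om"
      using c y unfolding Om_sat_def by blast
    have "qsmul (of_int (p^k)) (qsmul (of_int (p^c)) y) = qsmul (of_int (p^c)) (qsmul (of_int (p^k)) y)"
      by (simp add: qsmul_qsmul mult.commute)
    then have k': "qsmul (of_int (p^k)) (qsmul (of_int (p^c)) y) \<in> Om"
      using order_qsmul[OF order_Om k, of "p^c"] by (simp only:)
    have s': "qsmul (of_int s) (qsmul (of_int (p^c)) y) \<in> Om" using s(2) by (simp add: qsmul_qsmul)
    show ?thesis by (rule mem_Om_if_coprime_multiples[OF s' k' s(1)])
  qed
  then show ?thesis by blast
qed

definition Om_ext :: "nat \<Rightarrow> quat set" where
  "Om_ext e = {x + qsmul (of_int (p^e)) y | x y. x \<in> Om \<and> y \<in> Om_sat}"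

lemma Om_ext_memE:
  assumes "z \<in> Om_ext e"
  obtains x y where "z = x + qsmul (of_int (p^e)) y" "x \<in> Om" "y \<in> Om_sat"
  using assms unfolding Om_ext_def by blast

lemma Om_subset_Om_ext: "Om \<subseteq> Om_ext e"
proof
  fix x assume "x \<in> Om"
  moreover have "x = x + qsmul (of_int (p^e)) 0" by (simp add: qsmul_zero)
  ultimately show "x \<in> Om_ext e" unfolding Om_ext_def using Om_subset_Om_sat order_zero[OF order_Om] by blast
qed

lemma Om_ext_add:
  assumes "z \<in> Om_ext e" "w \<in> Om_ext e"
  shows "z + w \<in> Om_ext e"
proof -
  obtain x y where xy: "z = x + qsmul (of_int (p^e)) y" "x \<in> Om" "y \<in> Om_sat"
    using assms(1) by (rule Om_ext_memE)
  obtain x' y' where xy': "w = x' + qsmul (of_int (p^e)) y'" "x' \<in> Om" "y' \<in> Om_sat"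
    using assms(2) by (rule Om_ext_memE)
  have "z + w = (x + x') + qsmul (of_int (p^e)) (y + y')"
    unfolding xy(1) xy'(1) by (simp add: qsmul_add algebra_simps)
  then show ?thesis
    unfolding Om_ext_def using order_add[OF order_Om xy(2) xy'(2)] Om_sat_add[OF xy(3) xy'(3)] by blast
qed

lemma Om_ext_qsmul:
  assumes "z \<in> Om_ext e"
  shows "qsmul (of_int k) z \<in> Om_ext e"
proof -
  obtain x y where xy: "z = x + qsmul (of_int (p^e)) y" "x \<in> Om" "y \<in> Om_sat"
    using assms by (rule Om_ext_memE)
  have "qsmul (of_int k) z = qsmul (of_int k) x + qsmul (of_int (p^e)) (qsmul (of_int k) y)"
    unfolding xy(1) by (simp add: qsmul_add qsmul_qsmul mult.commute)
  then show ?thesis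
    unfolding Om_ext_def using order_qsmul[OF order_Om xy(2)] Om_sat_qsmul[OF xy(3)] by blast
qed

lemma Om_ext_qmul:
  assumes "z \<in> Om_ext e" "w \<in> Om_ext e"
  shows "qmul a b z w \<in> Om_ext e"
proof -
  obtain x y where xy: "z = x + qsmul (of_int (p^e)) y" "x \<in> Om" "y \<in> Om_sat"
    using assms(1) by (rule Om_ext_memE)
  obtain x' y' where xy': "w = x' + qsmul (of_int (p^e)) y'" "x' \<in> Om" "y' \<in> Om_sat"
    using assms(2) by (rule Om_ext_memE)
  have "qmul a b z w = qmul a b x x' + qsmul (of_int (p^e))
      (qmul a b y x' + qmul a b x y' + qsmul (of_int (p^e)) (qmul a b y y'))"
    unfolding xy(1) xy'(1)
    by (simp add: qmul_add_left qmul_add_right qmul_qsmul_left qmul_qsmul_right qsmul_add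
        qsmul_qsmul algebra_simps)
  moreover have "qmul a b y x' + qmul a b x y' + qsmul (of_int (p^e)) (qmul a b y y') \<in> Om_sat"
    using xy xy' Om_subset_Om_sat by (intro Om_sat_add Om_sat_qmul Om_sat_qsmul) auto
  ultimately show ?thesis unfolding Om_ext_def using order_qmul[OF order_Om xy(2) xy'(2)] by blast
qed

lemma Om_sat_descend:
  assumes Suc_e: "\<forall>y\<in>Om_sat. qsmul (of_int (p^Suc e)) y \<in> Om"
  shows "\<forall>y\<in>Om_sat. qsmul (of_int (p^e)) y \<in> Om"
proof -
  obtain v0 v1 v2 v3 where indep: "qindep v0 v1 v2 v3" and Om: "Om = zspan v0 v1 v2 v3"
    using order_is_lattice[OF order_Om] unfolding is_lattice_iff by blast
  have upper: "qsmul (of_int p) z \<in> Om" if z: "z \<in> Om_ext e" for z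
  proof -
    obtain x y where xy: "z = x + qsmul (of_int (p^e)) y" "x \<in> Om" "y \<in> Om_sat"
      using z by (rule Om_ext_memE)
    have "qsmul (of_int p) z = qsmul (of_int p) x + qsmul (of_int (p^Suc e)) y"
      unfolding xy(1) by (simp add: qsmul_add qsmul_qsmul)
    also have "\<dots> \<in> Om" using Suc_e xy(3) order_add[OF order_Om order_qsmul[OF order_Om xy(2)]] by blast
    finally show ?thesis .
  qed
  have "is_lattice (Om_ext e)"
  proof (rule qbasis.lattice_between[OF qbasis.intro[OF indep], where m = p])
    show "zspan v0 v1 v2 v3 \<subseteq> Om_ext e" unfolding Om[symmetric] by (rule Om_subset_Om_ext)
    show "qsmul (of_int p) z \<in> zspan v0 v1 v2 v3" if "z \<in> Om_ext e" for z
      unfolding Om[symmetric] using upper[OF that] .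
  qed (use p_pos Om_ext_add Om_ext_qsmul in auto)
  then have "Om_ext e = Om"
    using Om_subset_Om_ext order_qone[OF order_Om] Om_ext_qmul
    by (intro order_eq_Om_if_superset) (auto simp: is_order_def)
  then show ?thesis unfolding Om_ext_def using order_zero[OF order_Om] by force
qed

lemma Om_sat_eq_Om: "Om_sat = Om"
proof -
  have "\<forall>y\<in>Om_sat. qsmul (of_int (p^e)) y \<in> Om \<Longrightarrow> Om_sat \<subseteq> Om" for e
  proof (induction e)
    case 0
    then show ?case by (auto simp: qsmul_one)
  next
    case (Suc e)
    then show ?case using Om_sat_descend by blast
  qed
  then show ?thesis using Om_sat_bounded Om_subset_Om_sat by blast
qed

lemma padic_integral_imp_coprime_multiple_mem_Om:
  assumes "padic_integral z"
  shows "\<exists>s. \<not> p dvd s \<and> qsmul (of_int s) z \<in> Om"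
proof -
  obtain s c where s: "\<not> p dvd s" "qsmul (of_int (s * p^c)) z \<in> Om"
    using Om_denominator_bound assms by blast
  then have "qsmul (of_int s) z \<in> Om_sat"
    using padic_integral_qsmul[OF assms] unfolding Om_sat_def
    by (auto intro!: exI[of _ c] simp: qsmul_qsmul mult.commute)
  then show ?thesis using s(1) Om_sat_eq_Om by blast
qed

end

section \<open>The prime ideal and the tilde order\<close>

context maximal_order_at_p
begin

definition prime_ideal :: "quat set" where
  "prime_ideal = {u \<in> Om. padic_dvd p 1 (qnorm a b u)}"

text \<open>\<open>uw/p\<close> has \<open>p\<close>-integral norm, so some \<open>s uw/p\<close> with \<open>s\<close> prime to \<open>p\<close> lies in \<open>Om\<close>; so does
  \<open>p (uw/p)\<close>, hence \<open>uw/p\<close> itself.\<close>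

lemma prime_ideal_qmul_mem_p_Om:
  assumes u: "u \<in> prime_ideal" and w: "w \<in> prime_ideal"
  shows "\<exists>y\<in>Om. qmul a b u w = qsmul (of_int p) y"
proof -
  define z where "z = qsmul (1 / of_int p) (qmul a b u w)"
  have pz: "qsmul (of_int (p^1)) z = qmul a b u w"
    unfolding z_def using p_pos by (simp add: qsmul_qsmul qsmul_one)
  have "padic_dvd p (1 + 1) (qnorm a b (qmul a b u w))"
    unfolding qnorm_qmul using padic_dvd_mult u w unfolding prime_ideal_def by blast
  moreover have "qnorm a b z = qnorm a b (qmul a b u w) / of_int p ^ 2"
    unfolding z_def qnorm_qsmul by (simp add: power_divide)
  ultimately have "padic_integral z"
    unfolding padic_integral_def using padic_integral_div_p2 by (simp only: one_add_one)
  then obtain s where s: "\<not> p dvd s" "qsmul (of_int s) z \<in> Om"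
    using padic_integral_imp_coprime_multiple_mem_Om by blast
  have "qsmul (of_int (p^1)) z \<in> Om"
    unfolding pz using u w order_qmul[OF order_Om] unfolding prime_ideal_def by blast
  then have "z \<in> Om" using mem_Om_if_coprime_multiples[OF s(2) _ s(1)] by blast
  then show ?thesis using pz by (intro bexI[of _ z]) auto
qed

lemma exists_uniformizer:
  "\<exists>\<pi>\<in>Om. padic_dvd p 1 (qnorm a b \<pi>) \<and> \<not> padic_dvd p 2 (qnorm a b \<pi>)"
proof -
  obtain x where x: "padic_dvd p 1 (qnorm a b x)" "\<not> padic_dvd p 2 (qnorm a b x)"
    using exists_qnorm_valuation_one by blast
  then have "padic_integral x" unfolding padic_integral_def using padic_dvd_mono[of 0 1] by simp
  then obtain s where s: "\<not> p dvd s" "qsmul (of_int s) x \<in> Om"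
    using padic_integral_imp_coprime_multiple_mem_Om by blast
  have N: "qnorm a b (qsmul (of_int s) x) = of_int (s^2) * qnorm a b x" by (simp add: qnorm_qsmul)
  have "padic_dvd p 1 (qnorm a b (qsmul (of_int s) x))"
    unfolding N using padic_dvd_mult_of_int[OF x(1)] .
  moreover have "\<not> padic_dvd p 2 (qnorm a b (qsmul (of_int s) x))"
  proof
    assume "padic_dvd p 2 (qnorm a b (qsmul (of_int s) x))"
    moreover have "padic_dvd p 0 (1 / of_int (s^2))"
      using padic_dvdI[of "s^2" _ 0 1] s(1) p_prime by (simp add: prime_dvd_power_iff)
    ultimately have "padic_dvd p (0 + 2) (1 / of_int (s^2) * qnorm a b (qsmul (of_int s) x))"
      using padic_dvd_mult by blast
    moreover have "1 / of_int (s^2) * qnorm a b (qsmul (of_int s) x) = qnorm a b x"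
      unfolding N using s(1) by auto
    ultimately show False using x(2) by (simp only: add_0)
  qed
  ultimately show ?thesis using s(2) by blast
qed

lemma prime_ideal_add:
  assumes "u \<in> prime_ideal" "w \<in> prime_ideal"
  shows "u + w \<in> prime_ideal"
  using assms qnorm_padic_dvd_1_add[of u w] order_add[OF order_Om, of u w]
  unfolding prime_ideal_def by simp

lemma prime_ideal_diff:
  assumes "u \<in> prime_ideal" "w \<in> prime_ideal"
  shows "u - w \<in> prime_ideal"
  using assms qnorm_padic_dvd_1_add[of u "- w"] order_diff[OF order_Om, of u w]
  unfolding prime_ideal_def by (simp add: qnorm_uminus)

lemma prime_ideal_qsmul:
  assumes "u \<in> prime_ideal"
  shows "qsmul (of_int k) u \<in> prime_ideal"
  using assms order_qsmul[OF order_Om, of u k] padic_dvd_mult_of_int[of 1 "qnorm a b u" "k^2"]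
  unfolding prime_ideal_def by (simp add: qnorm_qsmul)

lemma prime_ideal_qmul_left:
  assumes "y \<in> Om" "u \<in> prime_ideal"
  shows "qmul a b y u \<in> prime_ideal"
proof -
  have "padic_dvd p (0 + 1) (qnorm a b y * qnorm a b u)"
    using padic_dvd_mult padic_integral_if_mem_Om[OF assms(1)] assms(2)
    unfolding padic_integral_def prime_ideal_def by blast
  then show ?thesis
    using order_qmul[OF order_Om assms(1)] assms(2) unfolding prime_ideal_def by (simp add: qnorm_qmul)
qed

lemma prime_ideal_qmul_right:
  assumes "y \<in> Om" "u \<in> prime_ideal"
  shows "qmul a b u y \<in> prime_ideal"
proof -
  have "padic_dvd p (1 + 0) (qnorm a b u * qnorm a b y)"
    using padic_dvd_mult padic_integral_if_mem_Om[OF assms(1)] assms(2)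
    unfolding padic_integral_def prime_ideal_def by blast
  then show ?thesis
    using order_qmul[OF order_Om _ assms(1)] assms(2) unfolding prime_ideal_def by (simp add: qnorm_qmul)
qed

lemma p_Om_subset_prime_ideal:
  assumes "y \<in> Om"
  shows "qsmul (of_int p) y \<in> prime_ideal"
proof -
  have "padic_dvd p (1 + 0) (of_int (p^2) * qnorm a b y)"
    using padic_dvd_mult[OF padic_dvd_of_int[of 1 "p^2"]] padic_integral_if_mem_Om[OF assms]
    unfolding padic_integral_def by (simp add: power2_eq_square)
  then show ?thesis
    using order_qsmul[OF order_Om assms] unfolding prime_ideal_def by (simp add: qnorm_qsmul)
qed

text \<open>Translating \<open>x\<close> by an integer \<open>h \<equiv> tr x / 2 (mod p)\<close> makes its trace, and then its
  norm, divisible by \<open>p\<close>.\<close>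

lemma tilde_order_decomp:
  assumes "x \<in> tilde_order a b p Om"
  shows "\<exists>h::int. x - qof_rat (of_int h) \<in> prime_ideal"
proof -
  obtain k where x: "x \<in> Om" and k: "qdisc a b x = of_int p * of_int k"
    using assms unfolding tilde_order_def by blast
  obtain T where T: "qtr x = of_int T" using order_qtr_Ints[OF order_Om x] by (auto elim: Ints_cases)
  define h where "h = T * ((p + 1) div 2)"
  have "2 * h = T * (p + 1)"
    unfolding h_def using prime_odd_int[OF p_prime p_gt_2] by (auto elim!: oddE)
  then have tr: "qtr (x - qof_rat (of_int h)) = - of_int (T * p)"
    unfolding qtr_diff qtr_qof_rat T by (simp add: algebra_simps flip: of_int_mult)
  have "qdisc a b (x - qof_rat (of_int h)) = of_int p * of_int k"
    using qdisc_diff_qof_rat k by simp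
  then have "4 * qnorm a b (x - qof_rat (of_int h)) = (qtr (x - qof_rat (of_int h)))^2 - of_int p * of_int k"
    unfolding qdisc_def by simp
  also have "\<dots> = of_int (p^1) * of_int (T * T * p - k)"
    unfolding tr by (simp add: power2_eq_square algebra_simps)
  finally have "qnorm a b (x - qof_rat (of_int h)) = of_int (p^1) * of_int (T * T * p - k) / of_int 4"
    by simp
  moreover have "\<not> p dvd 4" using p_not_dvd_2 prime_dvd_mult_iff[OF p_prime, of 2 2] by simp
  ultimately have "padic_dvd p 1 (qnorm a b (x - qof_rat (of_int h)))"
    using padic_dvdI by blast
  then have "x - qof_rat (of_int h) \<in> prime_ideal"
    unfolding prime_ideal_def using order_diff[OF order_Om x order_qof_int[OF order_Om]] by blast
  then show ?thesis by (intro exI[of _ h]) simp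
qed

lemma int_plus_prime_ideal_subset_tilde_order:
  assumes u: "u \<in> prime_ideal"
  shows "qof_rat (of_int h) + u \<in> tilde_order a b p Om"
proof -
  have N: "padic_dvd p 1 (qnorm a b u)" and "u \<in> Om" using u unfolding prime_ideal_def by auto
  obtain T where T: "qtr u = of_int T"
    using order_qtr_Ints[OF order_Om \<open>u \<in> Om\<close>] by (auto elim: Ints_cases)
  obtain M where M: "qnorm a b u = of_int M"
    using order_qnorm_Ints[OF order_Om \<open>u \<in> Om\<close>] by (auto elim: Ints_cases)
  obtain T' where T': "T = p * T'"
    using qtr_padic_dvd_1_if_qnorm_padic_dvd_1[OF N] padic_dvd_of_int_iff[of 1 T] T by (auto elim: dvdE)
  obtain M' where M': "M = p * M'" using N padic_dvd_of_int_iff[of 1 M] M by (auto elim: dvdE)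
  have "qdisc a b (qof_rat (of_int h) + u) = qdisc a b u" by (rule qdisc_add_qof_rat)
  also have "\<dots> = of_int p * of_int (T' * T' * p - 4 * M')"
    unfolding qdisc_def T M T' M' by (simp add: power2_eq_square algebra_simps)
  finally have "qdisc a b (qof_rat (of_int h) + u) = of_int p * of_int (T' * T' * p - 4 * M')" .
  moreover have "qof_rat (of_int h) + u \<in> Om"
    using order_add[OF order_Om order_qof_int[OF order_Om] \<open>u \<in> Om\<close>] .
  ultimately show ?thesis unfolding tilde_order_def by blast
qed

lemma tilde_order_eq: "tilde_order a b p Om = {qof_rat (of_int h) + u | h u. u \<in> prime_ideal}"
proof
  show "tilde_order a b p Om \<subseteq> {qof_rat (of_int h) + u | h u. u \<in> prime_ideal}"
  proof
    fix x assume "x \<in> tilde_order a b p Om"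
    then obtain h where "x - qof_rat (of_int h) \<in> prime_ideal" using tilde_order_decomp by blast
    then show "x \<in> {qof_rat (of_int h) + u | h u. u \<in> prime_ideal}"
      by (intro CollectI exI[of _ h] exI[of _ "x - qof_rat (of_int h)"]) simp
  qed
qed (use int_plus_prime_ideal_subset_tilde_order in blast)

lemma prime_ideal_subset_tilde_order: "prime_ideal \<subseteq> tilde_order a b p Om"
  unfolding tilde_order_eq by (force intro: exI[of _ 0] simp: qof_rat_0)

lemma tilde_order_add:
  assumes "x \<in> tilde_order a b p Om" "y \<in> tilde_order a b p Om"
  shows "x + y \<in> tilde_order a b p Om"
proof -
  obtain h u h' u' where "x = qof_rat (of_int h) + u" "u \<in> prime_ideal"
    "y = qof_rat (of_int h') + u'" "u' \<in> prime_ideal"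
    using assms unfolding tilde_order_eq by blast
  moreover from this have "x + y = qof_rat (of_int (h + h')) + (u + u')"
    by (simp add: qof_rat_add algebra_simps)
  ultimately show ?thesis unfolding tilde_order_eq using prime_ideal_add by blast
qed

lemma tilde_order_qsmul:
  assumes "x \<in> tilde_order a b p Om"
  shows "qsmul (of_int k) x \<in> tilde_order a b p Om"
proof -
  obtain h u where "x = qof_rat (of_int h) + u" "u \<in> prime_ideal"
    using assms unfolding tilde_order_eq by blast
  moreover from this have "qsmul (of_int k) x = qof_rat (of_int (k * h)) + qsmul (of_int k) u"
    by (simp add: qsmul_add qsmul_qof_rat)
  ultimately show ?thesis unfolding tilde_order_eq using prime_ideal_qsmul by blast
qed

section \<open>Orders of index \<open>p\<close> in the tilde order\<close>

lemma p_tilde_order_subset_if_index_p: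
  assumes "is_lattice L" "lattice_index (tilde_order a b p Om) L = nat p"
    and "x \<in> tilde_order a b p Om"
  shows "qsmul (of_int p) x \<in> L"
proof -
  have "card (coset L ` tilde_order a b p Om) = nat p"
    using assms(2) unfolding lattice_index_eq_card .
  moreover have "finite (coset L ` tilde_order a b p Om)"
    using calculation p_pos by (intro card_ge_0_finite) simp
  ultimately show ?thesis
    using index_qsmul_mem[OF assms(1) tilde_order_add _ assms(3)] p_pos by simp
qed

lemma prime_ideal_qmul_mem_if_index_p:
  assumes L: "is_order a b L" "L \<subseteq> tilde_order a b p Om" "lattice_index (tilde_order a b p Om) L = nat p"
    and y: "y \<in> Om" "qsmul (of_int p) y \<notin> L"
    and u: "u \<in> prime_ideal" and w: "w \<in> prime_ideal"
  shows "qmul a b u w \<in> L"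
proof -
  have lat: "is_lattice L" using order_is_lattice[OF L(1)] .
  define q where "q = qsmul (of_int p) y"
  have qP: "q \<in> prime_ideal" unfolding q_def using p_Om_subset_prime_ideal[OF y(1)] .
  then have qT: "q \<in> tilde_order a b p Om" using prime_ideal_subset_tilde_order by blast
  have mult_p: "qsmul (of_int p) x \<in> L" if "x \<in> prime_ideal" for x
    using p_tilde_order_subset_if_index_p[OF lat L(3)] prime_ideal_subset_tilde_order that by blast
  have "\<exists>k::int. x - qsmul (of_int k) q \<in> L" if "x \<in> prime_ideal" for x
    using index_prime_cyclic[OF lat tilde_order_qsmul _ qT y(2)[folded q_def] mult_p[OF qP]]
      L(3) prime_ideal_subset_tilde_order that unfolding lattice_index_eq_card by blast
  then obtain k l where kl: "u - qsmul (of_int k) q \<in> L" "w - qsmul (of_int l) q \<in> L"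
    using u w by blast
  define u' w' where "u' = u - qsmul (of_int k) q" and "w' = w - qsmul (of_int l) q"
  have "u' \<in> prime_ideal" "w' \<in> prime_ideal"
    unfolding u'_def w'_def using u w qP by (simp_all add: prime_ideal_diff prime_ideal_qsmul)
  have "u = u' + qsmul (of_int k) q" "w = w' + qsmul (of_int l) q" unfolding u'_def w'_def by simp_all
  then have "qmul a b u w = qmul a b u' w' + qsmul (of_int l) (qsmul (of_int p) (qmul a b u' y))
      + qsmul (of_int k) (qsmul (of_int p) (qmul a b y w'))
      + qsmul (of_int (k * l)) (qsmul (of_int p) (qsmul (of_int p) (qmul a b y y)))"
    unfolding q_def
    by (simp add: qmul_add_left qmul_add_right qmul_qsmul_left qmul_qsmul_right qsmul_qsmul qsmul_add
        algebra_simps)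
  also have "\<dots> \<in> L"
  proof -
    have uw: "qmul a b u' w' \<in> L" using order_qmul[OF L(1)] kl unfolding u'_def w'_def by blast
    have uy: "qsmul (of_int p) (qmul a b u' y) \<in> L"
      using mult_p prime_ideal_qmul_right[OF y(1) \<open>u' \<in> prime_ideal\<close>] by blast
    have yw: "qsmul (of_int p) (qmul a b y w') \<in> L"
      using mult_p prime_ideal_qmul_left[OF y(1) \<open>w' \<in> prime_ideal\<close>] by blast
    have yy: "qsmul (of_int p) (qsmul (of_int p) (qmul a b y y)) \<in> L"
      using mult_p p_Om_subset_prime_ideal order_qmul[OF order_Om y(1) y(1)] by blast
    show ?thesis
      using lattice_add[OF lat lattice_add[OF lat lattice_add[OF lat uw lattice_qsmul[OF lat uy]]
          lattice_qsmul[OF lat yw]] lattice_qsmul[OF lat yy]] .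
  qed
  finally show ?thesis .
qed

text \<open>If \<open>py \<notin> L\<close>, then \<open>P\<^sup>2 \<subseteq> L\<close>; with a uniformizer \<open>\<pi>\<close> of norm \<open>pm\<close>, \<open>m\<close> prime to \<open>p\<close>, this gives
  \<open>\<pi> (\<pi>\<^sup>* y) = m (py) \<in> L\<close>, and together with \<open>p (py) \<in> L\<close> that \<open>py \<in> L\<close>.\<close>

lemma p_Om_subset_if_order_of_index_p:
  assumes L: "is_order a b L" "L \<subseteq> tilde_order a b p Om" "lattice_index (tilde_order a b p Om) L = nat p"
    and y: "y \<in> Om"
  shows "qsmul (of_int p) y \<in> L"
proof (rule ccontr)
  assume notin: "qsmul (of_int p) y \<notin> L"
  have lat: "is_lattice L" using order_is_lattice[OF L(1)] .
  obtain \<pi> where \<pi>: "\<pi> \<in> Om" "padic_dvd p 1 (qnorm a b \<pi>)" "\<not> padic_dvd p 2 (qnorm a b \<pi>)"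
    using exists_uniformizer by blast
  obtain N where N: "qnorm a b \<pi> = of_int N" using order_qnorm_Ints[OF order_Om \<pi>(1)] by (auto elim: Ints_cases)
  obtain m where m: "N = p * m" using \<pi>(2) padic_dvd_of_int_iff[of 1 N] N by (auto elim: dvdE)
  have "\<not> p dvd m"
  proof
    assume "p dvd m"
    then have "p^2 dvd N" unfolding m by (simp add: power2_eq_square mult_dvd_mono)
    then show False using \<pi>(3) padic_dvd_of_int_iff[of 2 N] N by simp
  qed
  have "\<pi> \<in> prime_ideal" "qconj \<pi> \<in> prime_ideal"
    using \<pi> order_qconj[OF order_Om] unfolding prime_ideal_def by (simp_all add: qnorm_qconj)
  then have "qmul a b \<pi> (qmul a b (qconj \<pi>) y) \<in> L"
    using prime_ideal_qmul_mem_if_index_p[OF L y notin] prime_ideal_qmul_right[OF y] by blast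
  moreover have "qmul a b \<pi> (qmul a b (qconj \<pi>) y) = qsmul (of_int m) (qsmul (of_int p) y)"
    unfolding qmul_assoc[symmetric] qmul_qconj qmul_qof_rat_left N m by (simp add: qsmul_qsmul mult.commute)
  ultimately have m_mult: "qsmul (of_int m) (qsmul (of_int p) y) \<in> L" by simp
  have "qsmul (of_int p) (qsmul (of_int p) y) \<in> L"
    using p_tilde_order_subset_if_index_p[OF lat L(3)] p_Om_subset_prime_ideal[OF y]
      prime_ideal_subset_tilde_order by auto
  then have p_mult: "qsmul (of_int (p^1)) (qsmul (of_int p) y) \<in> L" by simp
  show False
    using lattice_mem_if_coprime_multiples[OF lat m_mult p_mult \<open>\<not> p dvd m\<close>] notin by blast
qed

lemma int_plus_p_Om_subset_if_order_of_index_p: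
  assumes "is_order a b L" "L \<subseteq> tilde_order a b p Om" "lattice_index (tilde_order a b p Om) L = nat p"
  shows "{qadd (qof_int n) (qsmul (of_int p) x) | n x. x \<in> Om} \<subseteq> L"
proof clarify
  fix n x assume "x \<in> Om"
  have "qof_rat (of_int n) \<in> L" using order_qof_int[OF assms(1)] .
  then show "qadd (qof_int n) (qsmul (of_int p) x) \<in> L"
    unfolding qadd_eq_plus qof_int_eq
    using lattice_add[OF order_is_lattice[OF assms(1)]] p_Om_subset_if_order_of_index_p[OF assms \<open>x \<in> Om\<close>]
    by blast
qed

lemma order_if_int_plus_p_Om_subset:
  assumes L: "is_lattice L" and sub: "L \<subseteq> tilde_order a b p Om"
    and Z: "{qadd (qof_int n) (qsmul (of_int p) x) | n x. x \<in> Om} \<subseteq> L"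
  shows "is_order a b L"
proof -
  have int: "qof_rat (of_int n) \<in> L" for n
  proof -
    have "qadd (qof_int n) (qsmul (of_int p) 0) \<in> L" using Z order_zero[OF order_Om] by blast
    then show ?thesis by (simp add: qadd_eq_plus qof_int_eq qsmul_zero)
  qed
  have p_Om: "qsmul (of_int p) y \<in> L" if "y \<in> Om" for y
  proof -
    have "qadd (qof_int 0) (qsmul (of_int p) y) \<in> L" using Z that by blast
    then show ?thesis by (simp add: qadd_eq_plus qof_int_eq qof_rat_0)
  qed
  have "qmul a b x y \<in> L" if xL: "x \<in> L" and yL: "y \<in> L" for x y
  proof -
    obtain h u h' u' where hu: "x = qof_rat (of_int h) + u" "u \<in> prime_ideal"
      "y = qof_rat (of_int h') + u'" "u' \<in> prime_ideal"
      using xL yL sub unfolding tilde_order_eq by blast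
    have "u \<in> L" "u' \<in> L"
      using lattice_diff[OF L xL int, of h] lattice_diff[OF L yL int, of h'] hu by simp_all
    obtain z where z: "z \<in> Om" "qmul a b u u' = qsmul (of_int p) z"
      using prime_ideal_qmul_mem_p_Om[OF hu(2,4)] by blast
    have "qmul a b x y = qmul a b u u' + qsmul (of_int h') u + qsmul (of_int h) u' + qof_rat (of_int (h * h'))"
      unfolding hu(1,3)
      by (simp add: qmul_add_left qmul_add_right qmul_qof_rat_left qmul_qof_rat_right qsmul_qof_rat
          qsmul_add algebra_simps)
    also have "\<dots> \<in> L"
      unfolding z(2) using lattice_add[OF L lattice_add[OF L lattice_add[OF L p_Om[OF z(1)]
          lattice_qsmul[OF L \<open>u \<in> L\<close>]] lattice_qsmul[OF L \<open>u' \<in> L\<close>]] int] .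
    finally show ?thesis .
  qed
  then show ?thesis unfolding is_order_def using L int[of 1] by (simp add: qone_eq)
qed

end

theorem proposition9:
  fixes p :: int and a b :: rat and Om L :: "quat set"
  assumes "prime p" and "p > 2"
    and "ramified_exactly_at a b p"
    and "is_maximal_order a b Om"
    and "is_lattice L"
    and "L \<subseteq> tilde_order a b p Om"
    and "lattice_index (tilde_order a b p Om) L = nat p"
  shows "is_order a b L \<longleftrightarrow>
           {qadd (qof_int n) (qsmul (of_int p) x) | n x. x \<in> Om} \<subseteq> L"
proof -
  interpret maximal_order_at_p p a b Om
    using assms(1-4) by unfold_locales
  show ?thesis
    using int_plus_p_Om_subset_if_order_of_index_p order_if_int_plus_p_Om_subset assms(5-7) by blast
qed

end
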